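(* Let $f:\mathbb{R}^d\to\mathbb{R}$ be $C^3$, $1\le k\le d-1$, $\mathbf{x}^*$ a critical point of $f$, with $\delta>0$, $L>\mu>0$, $M>0$ such that for all $\mathbf{x}$ with $\|\mathbf{x}-\mathbf{x}^*\|_2\le\delta$ the eigenvalues of $\nabla^2 f(\mathbf{x})$ satisfy $-L<\lambda_1\le\dots\le\lambda_k<-\mu<0<\mu<\lambda_{k+1}\le\dots\le\lambda_d<L$ and $\nabla^2 f$ is $M$-Lipschitz there. Let $\theta>0$ with $C(\theta):=(1-\sqrt{\theta})\mu-L\theta-5L\sqrt{\theta}>0$, $U=\{\mathbf{x}:\|\mathbf{x}-\mathbf{x}^*\|_2\le\min(C(\theta)/M,\delta)\}$, and step sizes $0<\alpha(n)<\frac{1}{2\mu}$ with $\sum\alpha(n)=\infty$, $\sum\alpha(n)^2<\infty$. Assume $\mathbb{E}\,\nabla f(\mathbf{x};\omega)=\nabla f(\mathbf{x})$ and $\mathbb{E}\|\nabla f(\mathbf{x};\omega)-\nabla f(\mathbf{x})\|_2^2\le\sigma^2$ for all $\mathbf{x}$. Consider $\mathbf{x}(n+1)=\mathbf{x}(n)-\alpha(n)(I-2\sum_{i=1}^k\tilde{\mathbf{v}}_i^{(n)}\tilde{\mathbf{v}}_i^{(n)\top})\nabla f(\mathbf{x}(n);\omega(n))$, where whenever $\mathbf{x}(n)\in U$ the orthonormal vectors $\tilde{\mathbf{v}}_i^{(n)}$ satisfy $\|\sum_i\tilde{\mathbf{v}}_i^{(n)}\tilde{\mathbf{v}}_i^{(n)\top}-\sum_i\mathbf{v}_i\mathbf{v}_i^\top\|_2^2\le\theta$,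 with $\mathbf{v}_i$ orthonormal eigenvectors of $\nabla^2 f(\mathbf{x}(n))$ for its $k$ smallest eigenvalues. If the event $E^\infty=\{\mathbf{x}(n)\in U\ \forall n\}$ has positive probability, then conditioned on $E^\infty$, $\mathbf{x}(n)\to\mathbf{x}^*$ almost surely.
   Context: $\omega(n)$ is a fresh sample from a probability space, independent of the past iterates and of the vectors used at step $n$. *)

theory Defs
  imports "HOL-Probability.Probability"
begin

text \<open>Vectors of R^d are modelled as real^'n with d = CARD('n); families of
  vectors are indexed by natural numbers i < d (0-based).\<close>

definition outer :: "real^'n \<Rightarrow> real^'n^'n" where
  "outer u = (\<chi> i j. u $ i * u $ j)"

definition mat_opnorm :: "real^'n^'n \<Rightarrow> real" where
  "mat_opnorm A = onorm (\<lambda>v. A *v v)"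

definition orthonormal_fam :: "nat \<Rightarrow> (nat \<Rightarrow> real^'n) \<Rightarrow> bool" where
  "orthonormal_fam m u \<longleftrightarrow> (\<forall>i<m. \<forall>j<m. u i \<bullet> u j = (if i = j then 1 else 0))"

definition sym_eigenvalues :: "real^'n^'n \<Rightarrow> (nat \<Rightarrow> real) \<Rightarrow> bool" where
  "sym_eigenvalues A lam \<longleftrightarrow>
     (\<forall>i j. i \<le> j \<longrightarrow> j < CARD('n) \<longrightarrow> lam i \<le> lam j) \<and>
     (\<exists>u. orthonormal_fam CARD('n) u \<and> (\<forall>i<CARD('n). A *v u i = lam i *\<^sub>R u i))"

definition bottom_eigvecs :: "real^'n^'n \<Rightarrow> nat \<Rightarrow> (nat \<Rightarrow> real^'n) \<Rightarrow> bool" where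
  "bottom_eigvecs A k v \<longleftrightarrow>
     (\<exists>lam. sym_eigenvalues A lam \<and> orthonormal_fam k v \<and>
            (\<forall>i<k. A *v v i = lam i *\<^sub>R v i))"

end

theory Submission
  imports Defs
begin

(* Reflecting the stochastic gradient in the span of the approximate bottom eigenvectors
   turns the strict saddle xs into an attractor. In an eigenbasis of the Hessian, the
   reflected Hessian has all eigenvalues above mu, so <R (x - xs), grad f x> >= c |x - xs|^2
   near xs, where c loses 2 sqrt(theta) L to the approximation of the eigenvectors and
   M |x - xs| to the Lipschitz Hessian. As R is an isometry, W n = |x n - xs|^2 on the event
   that the iterates stayed in U up to time n satisfies
   E[W (n+1) | F n] <= (1 - 2 alpha n c) W n + K alpha(n)^2, so W n + K sum_(j>=n) alpha(j)^2
   is a nonnegative supermartingale. Its expectation tends to 0, because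
   sum_n alpha n E[W n] < oo while sum_n alpha n = oo, and the maximal inequality turns this
   into almost sure convergence, which on the event of staying in U forever is the
   convergence x n -> xs. *)

section \<open>Orthonormal families and eigenbases\<close>

definition eigenbasis :: "real^'n^'n \<Rightarrow> (nat \<Rightarrow> real) \<Rightarrow> (nat \<Rightarrow> real^'n) \<Rightarrow> bool" where
  "eigenbasis A lam u \<longleftrightarrow>
     orthonormal_fam CARD('n) u \<and> (\<forall>i<CARD('n). A *v u i = lam i *\<^sub>R u i)"

lemma sym_eigenvalues_eigenbasis:
  "sym_eigenvalues A lam \<Longrightarrow> \<exists>u. eigenbasis A lam u"
  unfolding sym_eigenvalues_def eigenbasis_def by blast

lemma orthonormal_fam_sum_inner:
  assumes "orthonormal_fam k v" "i < k"
  shows "(\<Sum>j<k. c j * (v i \<bullet> v j)) = c i"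
proof -
  have "(\<Sum>j<k. c j * (v i \<bullet> v j)) = (\<Sum>j<k. if j = i then c j else 0)"
    by (rule sum.cong) (use assms in \<open>auto simp: orthonormal_fam_def\<close>)
  also have "\<dots> = c i"
    using assms(2) by simp
  finally show ?thesis .
qed

lemma orthonormal_fam_nonzero: "orthonormal_fam m u \<Longrightarrow> i < m \<Longrightarrow> u i \<noteq> 0"
  unfolding orthonormal_fam_def by (metis inner_zero_left zero_neq_one)

lemma orthonormal_fam_card_image:
  assumes "orthonormal_fam m u" "S \<subseteq> {..<m}"
  shows "card (u ` S) = card S"
proof (rule card_image, rule inj_onI)
  fix i j assume "i \<in> S" "j \<in> S" "u i = u j"
  then show "i = j"
    using assms unfolding orthonormal_fam_def by (metis lessThan_iff subsetD zero_neq_one)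
qed

lemma orthonormal_fam_independent:
  assumes "orthonormal_fam m u" "S \<subseteq> {..<m}"
  shows "independent (u ` S)"
proof (rule pairwise_orthogonal_independent)
  show "pairwise orthogonal (u ` S)"
    using assms unfolding pairwise_def orthogonal_def orthonormal_fam_def
    by (auto, metis lessThan_iff subsetD)
  show "0 \<notin> u ` S"
    using assms orthonormal_fam_nonzero by fastforce
qed

lemma orthonormal_basis_expansion:
  fixes u :: "nat \<Rightarrow> real^'n"
  assumes onf: "orthonormal_fam CARD('n) u"
  shows "w = (\<Sum>j<CARD('n). (u j \<bullet> w) *\<^sub>R u j)"
proof -
  let ?d = "CARD('n)"
  have "UNIV \<subseteq> span (u ` {..<?d})"
    using card_eq_dim[of "u ` {..<?d}" UNIV] orthonormal_fam_independent[OF onf]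
      orthonormal_fam_card_image[OF onf]
    by simp
  then have span_UNIV: "span (u ` {..<?d}) = UNIV"
    by auto
  define r where "r = w - (\<Sum>j<?d. (u j \<bullet> w) *\<^sub>R u j)"
  have "u l \<bullet> r = 0" if "l < ?d" for l
    using orthonormal_fam_sum_inner[OF onf that, of "\<lambda>j. u j \<bullet> w"]
    by (simp add: r_def inner_diff_right inner_sum_right mult.commute)
  then have "orthogonal r r"
    by (intro orthogonal_to_span[of r "u ` {..<?d}"])
       (auto simp: span_UNIV orthogonal_def inner_commute)
  then show ?thesis
    by (simp add: r_def orthogonal_def)
qed

lemma orthonormal_basis_parseval:
  fixes u :: "nat \<Rightarrow> real^'n"
  assumes "orthonormal_fam CARD('n) u"
  shows "(norm w)\<^sup>2 = (\<Sum>j<CARD('n). (u j \<bullet> w)\<^sup>2)"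
proof -
  have "(norm w)\<^sup>2 = (\<Sum>j<CARD('n). (u j \<bullet> w) *\<^sub>R u j) \<bullet> w"
    using orthonormal_basis_expansion[OF assms, of w] by (simp add: power2_norm_eq_inner)
  then show ?thesis
    by (simp add: inner_sum_left power2_eq_square)
qed

lemma orthonormal_basis_in_span:
  fixes u :: "nat \<Rightarrow> real^'n"
  assumes onf: "orthonormal_fam CARD('n) u" and S: "S \<subseteq> {..<CARD('n)}"
    and z: "\<And>l. l < CARD('n) \<Longrightarrow> l \<notin> S \<Longrightarrow> u l \<bullet> z = 0"
  shows "z \<in> span (u ` S)"
proof -
  have "z = (\<Sum>j<CARD('n). (u j \<bullet> z) *\<^sub>R u j)"
    by (rule orthonormal_basis_expansion[OF onf])
  also have "\<dots> = (\<Sum>j\<in>S. (u j \<bullet> z) *\<^sub>R u j)"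
    by (rule sum.mono_neutral_right) (use S z in auto)
  also have "\<dots> \<in> span (u ` S)"
    by (intro span_sum span_mul span_base) auto
  finally show ?thesis .
qed

lemma eigenbasis_inner_mult_vec:
  fixes A :: "real^'n^'n"
  assumes "eigenbasis A lam u" "l < CARD('n)"
  shows "u l \<bullet> (A *v z) = lam l * (u l \<bullet> z)"
proof -
  let ?d = "CARD('n)"
  have onf: "orthonormal_fam ?d u" and ev: "\<And>j. j < ?d \<Longrightarrow> A *v u j = lam j *\<^sub>R u j"
    using assms(1) by (auto simp: eigenbasis_def)
  have "A *v z = A *v (\<Sum>j<?d. (u j \<bullet> z) *\<^sub>R u j)"
    using orthonormal_basis_expansion[OF onf, of z] by simp
  also have "\<dots> = (\<Sum>j<?d. ((u j \<bullet> z) * lam j) *\<^sub>R u j)"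
    by (simp add: linear_sum[OF matrix_vector_mul_linear] matrix_vector_mult_scaleR ev)
  finally have "u l \<bullet> (A *v z) = (\<Sum>j<?d. ((u j \<bullet> z) * lam j) * (u l \<bullet> u j))"
    by (simp add: inner_sum_right)
  also have "\<dots> = (u l \<bullet> z) * lam l"
    by (rule orthonormal_fam_sum_inner[OF onf assms(2)])
  finally show ?thesis
    by simp
qed

lemma eigenbasis_norm_mult_vec_le:
  fixes A :: "real^'n^'n"
  assumes eb: "eigenbasis A lam u" and bd: "\<And>j. j < CARD('n) \<Longrightarrow> \<bar>lam j\<bar> \<le> L"
  shows "norm (A *v w) \<le> L * norm w"
proof -
  have onf: "orthonormal_fam CARD('n) u"
    using eb by (simp add: eigenbasis_def)
  have L: "0 \<le> L"
    using bd[of 0] by force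
  have "(norm (A *v w))\<^sup>2 = (\<Sum>j<CARD('n). (u j \<bullet> (A *v w))\<^sup>2)"
    by (rule orthonormal_basis_parseval[OF onf])
  also have "\<dots> = (\<Sum>j<CARD('n). (lam j)\<^sup>2 * (u j \<bullet> w)\<^sup>2)"
    by (intro sum.cong) (simp_all add: eigenbasis_inner_mult_vec[OF eb] power_mult_distrib)
  also have "\<dots> \<le> (\<Sum>j<CARD('n). L\<^sup>2 * (u j \<bullet> w)\<^sup>2)"
  proof (intro sum_mono mult_right_mono)
    fix j assume "j \<in> {..<CARD('n)}"
    then show "(lam j)\<^sup>2 \<le> L\<^sup>2"
      using bd[of j] L abs_le_square_iff[of "lam j" L] by simp
  qed simp
  also have "\<dots> = (L * norm w)\<^sup>2"
    by (simp only: orthonormal_basis_parseval[OF onf, of w] sum_distrib_left power_mult_distrib)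
  finally show ?thesis
    by (rule power2_le_imp_le) (use L in simp)
qed

lemma eigenvector_in_span_eigenbasis:
  fixes A :: "real^'n^'n"
  assumes eb: "eigenbasis A lam u" and z: "A *v z = t *\<^sub>R z" and S: "S \<subseteq> {..<CARD('n)}"
    and ne: "\<And>l. l < CARD('n) \<Longrightarrow> l \<notin> S \<Longrightarrow> lam l \<noteq> t"
  shows "z \<in> span (u ` S)"
proof (rule orthonormal_basis_in_span[OF _ S])
  show "orthonormal_fam CARD('n) u"
    using eb by (simp add: eigenbasis_def)
  fix l assume l: "l < CARD('n)" "l \<notin> S"
  have "lam l * (u l \<bullet> z) = t * (u l \<bullet> z)"
    using eigenbasis_inner_mult_vec[OF eb l(1), of z] z by (metis inner_scaleR_right)
  then show "u l \<bullet> z = 0"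
    using ne[OF l] by auto
qed

section \<open>The reflected Hessian\<close>

definition proj_fam :: "nat \<Rightarrow> (nat \<Rightarrow> real^'n) \<Rightarrow> real^'n \<Rightarrow> real^'n" where
  "proj_fam k v w = (\<Sum>i<k. (v i \<bullet> w) *\<^sub>R v i)"

definition refl_fam :: "nat \<Rightarrow> (nat \<Rightarrow> real^'n) \<Rightarrow> real^'n \<Rightarrow> real^'n" where
  "refl_fam k v w = w - 2 *\<^sub>R proj_fam k v w"

lemma outer_mult_vec: "outer u *v w = (u \<bullet> w) *\<^sub>R u"
  by (simp add: outer_def matrix_vector_mult_def vec_eq_iff inner_vec_def sum_distrib_left mult_ac)

lemma sum_outer_mult_vec: "(\<Sum>i<k. outer (v i)) *v w = proj_fam k v w"
proof -
  have "(\<Sum>i\<in>I. outer (v i)) *v w = (\<Sum>i\<in>I. (v i \<bullet> w) *\<^sub>R v i)" for I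
    by (induction I rule: infinite_finite_induct)
       (simp_all add: matrix_vector_mult_add_rdistrib outer_mult_vec)
  then show ?thesis
    by (simp add: proj_fam_def)
qed

lemma reflection_mult_vec:
  fixes v :: "nat \<Rightarrow> real^'n"
  shows "(mat 1 - 2 *\<^sub>R (\<Sum>i<k. outer (v i))) *v w = refl_fam k v w"
proof -
  have "(2 *\<^sub>R S) *v w = 2 *\<^sub>R (S *v w)" for S :: "real^'n^'n"
    by (simp add: matrix_vector_mult_def vec_eq_iff sum_distrib_left mult.assoc)
  then show ?thesis
    by (simp add: matrix_vector_mult_diff_rdistrib sum_outer_mult_vec refl_fam_def)
qed

lemma linear_proj_fam: "linear (proj_fam k v)"
proof -
  have "proj_fam k v = (*v) (\<Sum>i<k. outer (v i))"
    by (rule ext) (simp add: sum_outer_mult_vec)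
  then show ?thesis
    by simp
qed

lemma inner_proj_fam_commute: "u \<bullet> proj_fam k v w = proj_fam k v u \<bullet> w"
  by (simp add: proj_fam_def inner_sum_left inner_sum_right inner_commute mult.commute)

lemma inner_refl_fam_commute: "u \<bullet> refl_fam k v w = refl_fam k v u \<bullet> w"
  by (simp add: refl_fam_def inner_diff_left inner_diff_right inner_proj_fam_commute)

lemma proj_fam_self:
  assumes "orthonormal_fam k v" "i < k"
  shows "proj_fam k v (v i) = v i"
proof -
  have "proj_fam k v (v i) = (\<Sum>j<k. if j = i then v j else 0)"
    unfolding proj_fam_def
    by (rule sum.cong) (use assms in \<open>auto simp: orthonormal_fam_def\<close>)
  then show ?thesis
    using assms(2) by simp
qed

lemma norm_refl_fam:
  assumes onf: "orthonormal_fam k v"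
  shows "norm (refl_fam k v w) = norm w"
proof -
  have proj_inner: "proj_fam k v w \<bullet> p = (\<Sum>i<k. (v i \<bullet> w) * (v i \<bullet> p))" for p
    by (simp add: proj_fam_def inner_sum_left)
  have "v i \<bullet> proj_fam k v w = v i \<bullet> w" if "i < k" for i
    using orthonormal_fam_sum_inner[OF onf that, of "\<lambda>j. v j \<bullet> w"]
    by (simp add: proj_fam_def inner_sum_right)
  then have proj_proj: "proj_fam k v w \<bullet> proj_fam k v w = w \<bullet> proj_fam k v w"
    by (simp add: proj_inner inner_commute[of w "proj_fam k v w"])
  have "refl_fam k v w \<bullet> refl_fam k v w
      = w \<bullet> w - 4 * (w \<bullet> proj_fam k v w) + 4 * (proj_fam k v w \<bullet> proj_fam k v w)"
    by (simp add: refl_fam_def inner_diff_left inner_diff_right inner_commute[of "proj_fam k v w" w])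
  then show ?thesis
    by (simp add: proj_proj norm_eq_sqrt_inner)
qed

text \<open>Otherwise d - k + 1 orthonormal eigenvectors with nonnegative eigenvalues would lie in the
  span of the d - k basis vectors with nonnegative eigenvalues.\<close>
lemma sym_eigenvalues_below_neg:
  fixes A :: "real^'n^'n"
  assumes eb: "eigenbasis A lam u"
    and neg: "\<And>l. l < k \<Longrightarrow> lam l < 0"
    and nonneg: "\<And>l. k \<le> l \<Longrightarrow> l < CARD('n) \<Longrightarrow> 0 \<le> lam l"
    and sorted: "sym_eigenvalues A lam'" and i: "i < k" and k: "k \<le> CARD('n)"
  shows "lam' i < 0"
proof (rule ccontr)
  let ?d = "CARD('n)"
  assume "\<not> lam' i < 0"
  then have lam'_nonneg: "0 \<le> lam' j" if "i \<le> j" "j < ?d" for j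
    using sorted that unfolding sym_eigenvalues_def by (meson not_less order_trans)
  obtain u' where eb': "eigenbasis A lam' u'"
    using sym_eigenvalues_eigenbasis[OF sorted] by blast
  have onf': "orthonormal_fam ?d u'"
    using eb' by (simp add: eigenbasis_def)
  have "u' ` {i..<?d} \<subseteq> span (u ` {k..<?d})"
  proof
    fix z assume "z \<in> u' ` {i..<?d}"
    then obtain j where j: "i \<le> j" "j < ?d" "z = u' j"
      by auto
    show "z \<in> span (u ` {k..<?d})"
    proof (rule eigenvector_in_span_eigenbasis[OF eb])
      show "A *v z = lam' j *\<^sub>R z"
        using eb' j by (simp add: eigenbasis_def)
      show "lam l \<noteq> lam' j" if "l < ?d" "l \<notin> {k..<?d}" for l
        using neg[of l] lam'_nonneg[OF j(1,2)] that by auto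
    qed auto
  qed
  moreover have "independent (u' ` {i..<?d})"
    by (rule orthonormal_fam_independent[OF onf']) auto
  ultimately have "card (u' ` {i..<?d}) \<le> card (u ` {k..<?d})"
    using independent_span_bound[of "u ` {k..<?d}" "u' ` {i..<?d}"] by simp
  moreover have "card (u' ` {i..<?d}) = ?d - i"
    by (subst orthonormal_fam_card_image[OF onf']) auto
  moreover have "card (u ` {k..<?d}) = ?d - k"
    using eb by (subst orthonormal_fam_card_image[of ?d]) (auto simp: eigenbasis_def)
  ultimately show False
    using i k by linarith
qed

lemma bottom_eigvecs_proj_eigenbasis:
  fixes A :: "real^'n^'n"
  assumes eb: "eigenbasis A lam u"
    and neg: "\<And>l. l < k \<Longrightarrow> lam l < 0"
    and nonneg: "\<And>l. k \<le> l \<Longrightarrow> l < CARD('n) \<Longrightarrow> 0 \<le> lam l"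
    and k: "k \<le> CARD('n)" and bot: "bottom_eigvecs A k v" and j: "j < CARD('n)"
  shows "proj_fam k v (u j) = (if j < k then u j else 0)"
proof -
  let ?d = "CARD('n)"
  obtain lam' where sorted: "sym_eigenvalues A lam'" and onv: "orthonormal_fam k v"
    and ev: "\<And>i. i < k \<Longrightarrow> A *v v i = lam' i *\<^sub>R v i"
    using bot unfolding bottom_eigvecs_def by blast
  have lam'_neg: "lam' i < 0" if "i < k" for i
    by (rule sym_eigenvalues_below_neg[OF eb neg nonneg sorted that k])
  have v_in_span: "v i \<in> span (u ` {..<k})" if "i < k" for i
  proof (rule eigenvector_in_span_eigenbasis[OF eb ev[OF that]])
    show "lam l \<noteq> lam' i" if "l < ?d" "l \<notin> {..<k}" for l
      using nonneg[of l] lam'_neg[OF \<open>i < k\<close>] that by auto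
  qed (use k in auto)
  show ?thesis
  proof (cases "j < k")
    case True
    have "span (u ` {..<k}) \<subseteq> span (v ` {..<k})"
    proof -
      have "independent (v ` {..<k})" "card (v ` {..<k}) = k"
        using orthonormal_fam_independent[OF onv] orthonormal_fam_card_image[OF onv] by auto
      moreover have "dim (span (u ` {..<k})) = k"
        using eb k orthonormal_fam_independent[of ?d u "{..<k}"]
          orthonormal_fam_card_image[of ?d u "{..<k}"]
        by (simp add: eigenbasis_def dim_eq_card_independent)
      ultimately show ?thesis
        using card_eq_dim[of "v ` {..<k}" "span (u ` {..<k})"] v_in_span by auto
    qed
    moreover have "u j \<in> span (u ` {..<k})"
      using True by (intro span_base) auto
    ultimately have "u j \<in> span (v ` {..<k})"
      by auto
    moreover have "proj_fam k v x = id x" if "x \<in> v ` {..<k}" for x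
      using that by (auto simp: proj_fam_self[OF onv])
    ultimately have "proj_fam k v (u j) = id (u j)"
      by (metis linear_eq_on_span[OF linear_proj_fam linear_id])
    then show ?thesis
      using True by simp
  next
    case False
    have "v i \<bullet> u j = 0" if "i < k" for i
    proof -
      have "lam j * (u j \<bullet> v i) = lam' i * (u j \<bullet> v i)"
        using eigenbasis_inner_mult_vec[OF eb j, of "v i"] ev[OF that] by (metis inner_scaleR_right)
      moreover have "lam j \<noteq> lam' i"
        using nonneg[of j] lam'_neg[OF that] False j by auto
      ultimately show ?thesis
        by (simp add: inner_commute)
    qed
    then show ?thesis
      using False by (simp add: proj_fam_def)
  qed
qed

lemma bottom_eigvecs_reflected_form_ge:
  fixes A :: "real^'n^'n"
  assumes eb: "eigenbasis A lam u"
    and neg: "\<And>l. l < k \<Longrightarrow> lam l < - \<mu>"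
    and pos: "\<And>l. k \<le> l \<Longrightarrow> l < CARD('n) \<Longrightarrow> \<mu> < lam l"
    and \<mu>: "0 \<le> \<mu>" and k: "k \<le> CARD('n)" and bot: "bottom_eigvecs A k v"
  shows "\<mu> * (norm w)\<^sup>2 \<le> w \<bullet> (A *v w) - 2 * (proj_fam k v w \<bullet> (A *v w))"
proof -
  let ?d = "CARD('n)"
  define c where "c j = u j \<bullet> w" for j
  have onf: "orthonormal_fam ?d u"
    using eb by (simp add: eigenbasis_def)
  have w: "w = (\<Sum>j<?d. c j *\<^sub>R u j)"
    unfolding c_def by (rule orthonormal_basis_expansion[OF onf])
  have Aw: "u j \<bullet> (A *v w) = lam j * c j" if "j < ?d" for j
    unfolding c_def by (rule eigenbasis_inner_mult_vec[OF eb that])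
  have proj_u: "proj_fam k v (u j) = (if j < k then u j else 0)" if "j < ?d" for j
  proof (rule bottom_eigvecs_proj_eigenbasis[OF eb _ _ k bot that])
    show "lam l < 0" if "l < k" for l
      using neg[OF that] \<mu> by linarith
    show "0 \<le> lam l" if "k \<le> l" "l < ?d" for l
      using pos[OF that] \<mu> by linarith
  qed
  have "proj_fam k v w = (\<Sum>j<?d. c j *\<^sub>R proj_fam k v (u j))"
    by (subst w) (simp add: linear_sum[OF linear_proj_fam] linear_cmul[OF linear_proj_fam])
  then have "proj_fam k v w \<bullet> (A *v w) = (\<Sum>j<?d. if j < k then lam j * (c j)\<^sup>2 else 0)"
    by (auto simp: inner_sum_left proj_u Aw power2_eq_square intro!: sum.cong)
  moreover have "w \<bullet> (A *v w) = (\<Sum>j<?d. lam j * (c j)\<^sup>2)"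
    by (subst (1) w) (auto simp: inner_sum_left Aw power2_eq_square intro!: sum.cong)
  ultimately have "w \<bullet> (A *v w) - 2 * (proj_fam k v w \<bullet> (A *v w))
      = (\<Sum>j<?d. lam j * (c j)\<^sup>2 - 2 * (if j < k then lam j * (c j)\<^sup>2 else 0))"
    by (simp only: sum_subtractf sum_distrib_left)
  also have "\<dots> = (\<Sum>j<?d. (if j < k then - lam j else lam j) * (c j)\<^sup>2)"
    by (intro sum.cong) auto
  also have "\<dots> \<ge> (\<Sum>j<?d. \<mu> * (c j)\<^sup>2)"
  proof (intro sum_mono mult_right_mono)
    fix j assume "j \<in> {..<?d}"
    then show "\<mu> \<le> (if j < k then - lam j else lam j)"
      using neg[of j] pos[of j] by auto
  qed simp
  also have "(\<Sum>j<?d. \<mu> * (c j)\<^sup>2) = \<mu> * (norm w)\<^sup>2"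
    by (simp add: orthonormal_basis_parseval[OF onf] sum_distrib_left c_def)
  finally show ?thesis .
qed

section \<open>Local estimates near the saddle\<close>

definition saddle_spectrum :: "real^'n^'n \<Rightarrow> nat \<Rightarrow> real \<Rightarrow> real \<Rightarrow> bool" where
  "saddle_spectrum A k \<mu> L \<longleftrightarrow>
     (\<exists>lam. sym_eigenvalues A lam \<and>
       (\<forall>i<k. - L < lam i \<and> lam i < - \<mu>) \<and>
       (\<forall>i. k \<le> i \<longrightarrow> i < CARD('n) \<longrightarrow> \<mu> < lam i \<and> lam i < L))"

lemma saddle_spectrum_norm_mult_vec_le:
  fixes A :: "real^'n^'n"
  assumes "saddle_spectrum A k \<mu> L" "0 \<le> \<mu>"
  shows "norm (A *v w) \<le> L * norm w"
proof -
  obtain lam u where eb: "eigenbasis A lam u"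
    and neg: "\<And>i. i < k \<Longrightarrow> - L < lam i \<and> lam i < - \<mu>"
    and pos: "\<And>i. k \<le> i \<Longrightarrow> i < CARD('n) \<Longrightarrow> \<mu> < lam i \<and> lam i < L"
    using assms(1) sym_eigenvalues_eigenbasis unfolding saddle_spectrum_def by metis
  have "\<bar>lam j\<bar> \<le> L" if "j < CARD('n)" for j
    using neg[of j] pos[of j] that assms(2) by (cases "j < k") auto
  then show ?thesis
    by (rule eigenbasis_norm_mult_vec_le[OF eb])
qed

lemma saddle_spectrum_reflected_form_ge:
  fixes A :: "real^'n^'n"
  assumes "saddle_spectrum A k \<mu> L" "0 \<le> \<mu>" "k \<le> CARD('n)" "bottom_eigvecs A k v"
  shows "\<mu> * (norm w)\<^sup>2 \<le> w \<bullet> (A *v w) - 2 * (proj_fam k v w \<bullet> (A *v w))"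
proof -
  obtain lam u where eb: "eigenbasis A lam u"
    and neg: "\<And>i. i < k \<Longrightarrow> lam i < - \<mu>"
    and pos: "\<And>i. k \<le> i \<Longrightarrow> i < CARD('n) \<Longrightarrow> \<mu> < lam i"
    using assms(1) sym_eigenvalues_eigenbasis unfolding saddle_spectrum_def by metis
  show ?thesis
    by (rule bottom_eigvecs_reflected_form_ge[OF eb neg pos assms(2-4)])
qed

lemma mat_opnorm_mult_vec_le:
  fixes A :: "real^'n^'n"
  shows "norm (A *v w) \<le> mat_opnorm A * norm w"
  using onorm[OF matrix_vector_mul_bounded_linear[of A]] by (simp add: mat_opnorm_def)

lemma lipschitz_hessian_taylor:
  fixes g :: "real^'n \<Rightarrow> real^'n" and H :: "real^'n \<Rightarrow> real^'n^'n"
  assumes hess: "\<And>y. (g has_derivative (\<lambda>h. H y *v h)) (at y)"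
    and lip: "\<And>y z. norm (y - x0) \<le> \<delta> \<Longrightarrow> norm (z - x0) \<le> \<delta> \<Longrightarrow>
               mat_opnorm (H y - H z) \<le> Mlip * norm (y - z)"
    and y: "norm (y - x0) \<le> \<delta>" and Mlip: "0 \<le> Mlip"
  shows "norm (g y - g x0 - H y *v (y - x0)) \<le> Mlip * (norm (y - x0))\<^sup>2"
proof -
  have "norm (g y - g x0 - H y *v (y - x0)) \<le> norm (y - x0) * (Mlip * norm (y - x0))"
  proof (rule differentiable_bound_linearization[where S = "closed_segment x0 y"
        and f' = "\<lambda>z h. H z *v h"])
    show "x0 + t *\<^sub>R (y - x0) \<in> closed_segment x0 y" if "t \<in> {0..1}" for t
      using that by (auto simp: in_segment algebra_simps)
    show "(g has_derivative (\<lambda>h. H z *v h)) (at z within closed_segment x0 y)" for z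
      by (rule has_derivative_at_withinI[OF hess])
    show "onorm ((\<lambda>h. H z *v h) - (\<lambda>h. H y *v h)) \<le> Mlip * norm (y - x0)"
      if z: "z \<in> closed_segment x0 y" for z
    proof -
      have "(\<lambda>h. H z *v h) - (\<lambda>h. H y *v h) = (\<lambda>h. (H z - H y) *v h)"
        by (simp add: fun_diff_def matrix_vector_mult_diff_rdistrib)
      then have "onorm ((\<lambda>h. H z *v h) - (\<lambda>h. H y *v h)) = mat_opnorm (H z - H y)"
        by (simp add: mat_opnorm_def)
      also have "\<dots> \<le> Mlip * norm (z - y)"
        using segment_bound[OF z] y by (intro lip) auto
      also have "\<dots> \<le> Mlip * norm (y - x0)"
        using segment_bound[OF z] Mlip by (intro mult_left_mono) auto
      finally show ?thesis .
    qed
  qed auto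
  then show ?thesis
    by (simp add: power2_eq_square mult_ac)
qed

context
  fixes g :: "real^'n \<Rightarrow> real^'n" and H :: "real^'n \<Rightarrow> real^'n^'n"
    and x0 y :: "real^'n" and k :: nat and \<delta> \<mu> L Mlip :: real
  assumes hess: "\<And>y. (g has_derivative (\<lambda>h. H y *v h)) (at y)"
    and crit: "g x0 = 0"
    and lip: "\<And>y z. norm (y - x0) \<le> \<delta> \<Longrightarrow> norm (z - x0) \<le> \<delta> \<Longrightarrow>
               mat_opnorm (H y - H z) \<le> Mlip * norm (y - z)"
    and Mlip: "0 \<le> Mlip" and \<mu>: "0 \<le> \<mu>"
    and y: "norm (y - x0) \<le> \<delta>" and spec: "saddle_spectrum (H y) k \<mu> L"
begin

lemma norm_grad_near_saddle_le: "norm (g y) \<le> L * norm (y - x0) + Mlip * (norm (y - x0))\<^sup>2"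
proof -
  have "norm (g y) \<le> norm (H y *v (y - x0)) + norm (g y - g x0 - H y *v (y - x0))"
    using crit norm_triangle_ineq[of "H y *v (y - x0)" "g y - H y *v (y - x0)"] by simp
  then show ?thesis
    using saddle_spectrum_norm_mult_vec_le[OF spec \<mu>, of "y - x0"]
      lipschitz_hessian_taylor[OF hess lip y Mlip] by linarith
qed

text \<open>The exact reflection would give the spectral gap \<mu>; replacing the bottom eigenvectors v by
  their approximation V costs at most 2 sqrt \<theta> L, and the curvature of g at most Mlip times
  the distance.\<close>
lemma refl_inner_grad_near_saddle_ge:
  assumes k: "k \<le> CARD('n)" and V: "orthonormal_fam k V" and bot: "bottom_eigvecs (H y) k v"
    and approx: "(mat_opnorm ((\<Sum>i<k. outer (V i)) - (\<Sum>i<k. outer (v i))))\<^sup>2 \<le> \<theta>"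
  shows "(\<mu> - 2 * sqrt \<theta> * L - Mlip * norm (y - x0)) * (norm (y - x0))\<^sup>2
    \<le> refl_fam k V (y - x0) \<bullet> g y"
proof -
  define e where "e = y - x0"
  define A where "A = H y"
  define \<rho> where "\<rho> = g y - A *v e"
  have nA: "norm (A *v e) \<le> L * norm e"
    unfolding A_def by (rule saddle_spectrum_norm_mult_vec_le[OF spec \<mu>])
  have n\<rho>: "norm \<rho> \<le> Mlip * (norm e)\<^sup>2"
    using lipschitz_hessian_taylor[OF hess lip y Mlip] crit by (simp add: \<rho>_def e_def A_def)
  have "norm ((\<Sum>i<k. outer (V i)) *v e - (\<Sum>i<k. outer (v i)) *v e)
      \<le> mat_opnorm ((\<Sum>i<k. outer (V i)) - (\<Sum>i<k. outer (v i))) * norm e"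
    by (metis mat_opnorm_mult_vec_le matrix_vector_mult_diff_rdistrib)
  also have "\<dots> \<le> sqrt \<theta> * norm e"
    using approx by (intro mult_right_mono real_le_rsqrt) auto
  finally have dP: "norm (proj_fam k V e - proj_fam k v e) \<le> sqrt \<theta> * norm e"
    by (simp add: sum_outer_mult_vec)
  have "\<bar>(proj_fam k V e - proj_fam k v e) \<bullet> (A *v e)\<bar> \<le> sqrt \<theta> * norm e * (L * norm e)"
    using Cauchy_Schwarz_ineq2[of "proj_fam k V e - proj_fam k v e" "A *v e"] dP nA
    by (smt (verit) mult_mono norm_ge_zero)
  moreover have "\<bar>refl_fam k V e \<bullet> \<rho>\<bar> \<le> norm e * (Mlip * (norm e)\<^sup>2)"
    using Cauchy_Schwarz_ineq2[of "refl_fam k V e" \<rho>] n\<rho>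
    by (simp add: norm_refl_fam[OF V] mult_left_mono order_trans)
  moreover have "\<mu> * (norm e)\<^sup>2 \<le> e \<bullet> (A *v e) - 2 * (proj_fam k v e \<bullet> (A *v e))"
    unfolding A_def by (rule saddle_spectrum_reflected_form_ge[OF spec \<mu> k bot])
  moreover have "refl_fam k V e \<bullet> g y = (e \<bullet> (A *v e) - 2 * (proj_fam k v e \<bullet> (A *v e)))
      - 2 * ((proj_fam k V e - proj_fam k v e) \<bullet> (A *v e)) + refl_fam k V e \<bullet> \<rho>"
    by (simp add: \<rho>_def refl_fam_def algebra_simps)
  ultimately show ?thesis
    unfolding e_def[symmetric] by (simp add: algebra_simps power2_eq_square)
qed

end

section \<open>Unbiased gradient estimates with independent noise\<close>

locale unbiased_oracle = P: prob_space P for P :: "'b measure" +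
  fixes G :: "real^'n \<Rightarrow> 'b \<Rightarrow> real^'n" and g :: "real^'n \<Rightarrow> real^'n" and \<sigma> :: real
  assumes G_meas: "(\<lambda>(y, s). G y s) \<in> borel_measurable (borel \<Otimes>\<^sub>M P)"
    and g_meas: "g \<in> borel_measurable borel"
    and G_int: "\<And>y. integrable P (G y)"
    and G_unbiased: "\<And>y. (\<integral>s. G y s \<partial>P) = g y"
    and G_var: "\<And>y. (\<integral>\<^sup>+ s. ennreal ((norm (G y s - g y))\<^sup>2) \<partial>P) \<le> ennreal (\<sigma>\<^sup>2)"
begin

lemma measurable_G_comp[measurable]:
  fixes f :: "_ \<Rightarrow> real^'n"
  assumes [measurable]: "f \<in> borel_measurable (N \<Otimes>\<^sub>M P)"
  shows "(\<lambda>p. G (f p) (snd p)) \<in> borel_measurable (N \<Otimes>\<^sub>M P)"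
  using measurable_compose[OF _ G_meas, of "\<lambda>p. (f p, snd p)"] by simp

lemma measurable_G[measurable]: "G y \<in> borel_measurable P"
  by (rule borel_measurable_integrable[OF G_int])

lemma integral_oracle_error: "(\<integral>s. G y s - g y \<partial>P) = 0"
  using G_int[of y] by (simp add: G_unbiased P.prob_space)

lemma nn_integral_oracle_error_le: "(\<integral>\<^sup>+ s. ennreal (norm (G y s - g y)) \<partial>P) \<le> 1 + ennreal (\<sigma>\<^sup>2)"
proof -
  have "ennreal t \<le> 1 + ennreal (t\<^sup>2)" if "0 \<le> t" for t :: real
  proof -
    have "0 \<le> (t - 1 / 2)\<^sup>2"
      by simp
    then have "t \<le> 1 + t\<^sup>2"
      by (simp add: power2_eq_square algebra_simps)
    then show ?thesis
      by (metis ennreal_1 ennreal_leI ennreal_plus zero_le_one zero_le_power2)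
  qed
  then have "(\<integral>\<^sup>+ s. ennreal (norm (G y s - g y)) \<partial>P)
      \<le> (\<integral>\<^sup>+ s. 1 + ennreal ((norm (G y s - g y))\<^sup>2) \<partial>P)"
    by (intro nn_integral_mono) simp
  also have "\<dots> = 1 + (\<integral>\<^sup>+ s. ennreal ((norm (G y s - g y))\<^sup>2) \<partial>P)"
    using G_int[of y] by (subst nn_integral_add) (auto simp: P.emeasure_space_1)
  also have "\<dots> \<le> 1 + ennreal (\<sigma>\<^sup>2)"
    using G_var[of y] by (simp add: add_left_mono)
  finally show ?thesis .
qed

end

text \<open>The oracle is queried at W, a sample of P independent of the information Z available
  at the time of the query.\<close>
locale indep_oracle_query = unbiased_oracle P G g \<sigma> + M: prob_space M
  for P :: "'b measure" and G g \<sigma> and M :: "'a measure" +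
  fixes S :: "'c measure" and Z :: "'a \<Rightarrow> 'c" and W :: "'a \<Rightarrow> 'b"
  assumes Z_meas: "Z \<in> measurable M S" and W_meas: "W \<in> measurable M P"
    and W_distr: "distr M P W = P"
    and indep: "M.indep_set (sets (vimage_algebra (space M) W P)) (sets (vimage_algebra (space M) Z S))"
begin

definition Q where "Q = distr M S Z"

sublocale Q: prob_space Q
  unfolding Q_def by (rule M.prob_space_distr[OF Z_meas])

sublocale QP: pair_sigma_finite Q P
  by unfold_locales

lemma sets_Q[measurable_cong]: "sets Q = sets S"
  by (simp add: Q_def)

lemma measurable_ZW: "(\<lambda>a. (Z a, W a)) \<in> measurable M (S \<Otimes>\<^sub>M P)"
  using Z_meas W_meas by (rule measurable_Pair)

lemma distr_ZW: "distr M (S \<Otimes>\<^sub>M P) (\<lambda>a. (Z a, W a)) = Q \<Otimes>\<^sub>M P"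
proof (rule pair_measure_eqI[symmetric])
  show "sigma_finite_measure Q" "sigma_finite_measure P"
    by unfold_locales
  show "sets (Q \<Otimes>\<^sub>M P) = sets (distr M (S \<Otimes>\<^sub>M P) (\<lambda>a. (Z a, W a)))"
    by (simp add: Q_def)
  fix A B assume A: "A \<in> sets Q" and B: "B \<in> sets P"
  have AS: "A \<in> sets S"
    using A by (simp add: Q_def)
  have "(\<lambda>a. (Z a, W a)) -` (A \<times> B) \<inter> space M = (W -` B \<inter> space M) \<inter> (Z -` A \<inter> space M)"
    by auto
  then have "emeasure (distr M (S \<Otimes>\<^sub>M P) (\<lambda>a. (Z a, W a))) (A \<times> B)
      = M.prob ((W -` B \<inter> space M) \<inter> (Z -` A \<inter> space M))"
    using AS B by (simp add: emeasure_distr[OF measurable_ZW] M.emeasure_eq_measure)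
  also have "\<dots> = M.prob (W -` B \<inter> space M) * M.prob (Z -` A \<inter> space M)"
    using indep unfolding M.indep_sets2_eq
    by (auto intro!: in_vimage_algebra[OF B] in_vimage_algebra[OF AS])
  also have "\<dots> = emeasure Q A * emeasure P B"
  proof -
    have "emeasure Q A = M.prob (Z -` A \<inter> space M)"
      using AS by (simp add: Q_def emeasure_distr[OF Z_meas] M.emeasure_eq_measure)
    moreover have "emeasure P B = M.prob (W -` B \<inter> space M)"
      using emeasure_distr[OF W_meas B] by (simp add: W_distr M.emeasure_eq_measure)
    ultimately show ?thesis
      by (simp add: ennreal_mult' mult.commute)
  qed
  finally show "emeasure Q A * emeasure P B = emeasure (distr M (S \<Otimes>\<^sub>M P) (\<lambda>a. (Z a, W a))) (A \<times> B)"
    by simp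
qed

lemma nn_integral_sq_error_le:
  assumes [measurable]: "\<Psi> \<in> borel_measurable S" "B \<in> sets S"
  shows "(\<integral>\<^sup>+a. indicator B (Z a) * ennreal ((norm (G (\<Psi> (Z a)) (W a) - g (\<Psi> (Z a))))\<^sup>2) \<partial>M)
    \<le> ennreal (\<sigma>\<^sup>2) * emeasure M (Z -` B \<inter> space M)"
proof -
  note g_meas[measurable]
  define f where "f p = indicator B (fst p) * ennreal ((norm (G (\<Psi> (fst p)) (snd p) - g (\<Psi> (fst p))))\<^sup>2)" for p
  have [measurable]: "f \<in> borel_measurable (S \<Otimes>\<^sub>M P)"
    unfolding f_def by measurable
  have "(\<integral>\<^sup>+a. indicator B (Z a) * ennreal ((norm (G (\<Psi> (Z a)) (W a) - g (\<Psi> (Z a))))\<^sup>2) \<partial>M)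
      = (\<integral>\<^sup>+a. f (Z a, W a) \<partial>M)"
    by (simp add: f_def)
  also have "\<dots> = integral\<^sup>N (Q \<Otimes>\<^sub>M P) f"
    by (simp add: nn_integral_distr[OF measurable_ZW, symmetric] distr_ZW)
  also have "\<dots> = (\<integral>\<^sup>+z. \<integral>\<^sup>+s. f (z, s) \<partial>P \<partial>Q)"
    by (rule P.nn_integral_fst[symmetric]) simp
  also have "\<dots> \<le> (\<integral>\<^sup>+z. ennreal (\<sigma>\<^sup>2) * indicator B z \<partial>Q)"
  proof (rule nn_integral_mono)
    fix z
    have "(\<integral>\<^sup>+s. f (z, s) \<partial>P)
        = indicator B z * (\<integral>\<^sup>+s. ennreal ((norm (G (\<Psi> z) s - g (\<Psi> z)))\<^sup>2) \<partial>P)"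
      unfolding f_def by (subst nn_integral_cmult[symmetric]) measurable
    also have "\<dots> \<le> indicator B z * ennreal (\<sigma>\<^sup>2)"
      by (rule mult_left_mono[OF G_var]) simp
    finally show "(\<integral>\<^sup>+s. f (z, s) \<partial>P) \<le> ennreal (\<sigma>\<^sup>2) * indicator B z"
      by (simp add: mult.commute)
  qed
  also have "\<dots> = ennreal (\<sigma>\<^sup>2) * emeasure M (Z -` B \<inter> space M)"
    by (simp add: nn_integral_cmult_indicator Q_def emeasure_distr[OF Z_meas])
  finally show ?thesis .
qed

lemma integrable_inner_error_pair:
  assumes [measurable]: "\<Phi> \<in> borel_measurable S" "\<Psi> \<in> borel_measurable S"
    and bd: "\<And>z. norm (\<Phi> z) \<le> Bd"
  shows "integrable (Q \<Otimes>\<^sub>M P) (\<lambda>p. \<Phi> (fst p) \<bullet> (G (\<Psi> (fst p)) (snd p) - g (\<Psi> (fst p))))"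
    (is "integrable _ ?h")
  unfolding integrable_iff_bounded
proof
  note g_meas[measurable]
  show "?h \<in> borel_measurable (Q \<Otimes>\<^sub>M P)"
    by measurable
  have Bd: "0 \<le> Bd"
    using bd[of undefined] norm_ge_zero order_trans by blast
  have "(\<integral>\<^sup>+p. ennreal (norm (?h p)) \<partial>(Q \<Otimes>\<^sub>M P))
      \<le> (\<integral>\<^sup>+p. ennreal Bd * ennreal (norm (G (\<Psi> (fst p)) (snd p) - g (\<Psi> (fst p)))) \<partial>(Q \<Otimes>\<^sub>M P))"
  proof (rule nn_integral_mono)
    fix p
    have "norm (?h p) \<le> norm (\<Phi> (fst p)) * norm (G (\<Psi> (fst p)) (snd p) - g (\<Psi> (fst p)))"
      unfolding real_norm_def by (rule Cauchy_Schwarz_ineq2)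
    also have "\<dots> \<le> Bd * norm (G (\<Psi> (fst p)) (snd p) - g (\<Psi> (fst p)))"
      by (intro mult_right_mono bd) simp
    finally show "ennreal (norm (?h p))
        \<le> ennreal Bd * ennreal (norm (G (\<Psi> (fst p)) (snd p) - g (\<Psi> (fst p))))"
      using Bd by (simp add: ennreal_mult[symmetric] ennreal_leI)
  qed
  also have "\<dots> = (\<integral>\<^sup>+z. ennreal Bd * (\<integral>\<^sup>+s. ennreal (norm (G (\<Psi> z) s - g (\<Psi> z))) \<partial>P) \<partial>Q)"
    by (subst P.nn_integral_fst[symmetric]) (simp_all add: nn_integral_cmult)
  also have "\<dots> \<le> (\<integral>\<^sup>+z. ennreal Bd * (1 + ennreal (\<sigma>\<^sup>2)) \<partial>Q)"
    by (intro nn_integral_mono mult_left_mono nn_integral_oracle_error_le) simp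
  also have "\<dots> < \<infinity>"
    by (simp add: Q.emeasure_space_1 ennreal_mult_less_top)
  finally show "(\<integral>\<^sup>+p. ennreal (norm (?h p)) \<partial>(Q \<Otimes>\<^sub>M P)) < \<infinity>" .
qed

text \<open>The bound is only needed on the sample space, so \<Phi> is truncated outside it.\<close>
lemma integral_inner_error_eq_0:
  assumes [measurable]: "\<Phi> \<in> borel_measurable S" "\<Psi> \<in> borel_measurable S"
    and bd: "\<And>a. a \<in> space M \<Longrightarrow> norm (\<Phi> (Z a)) \<le> Bd" and Bd: "0 \<le> Bd"
  shows "integrable M (\<lambda>a. \<Phi> (Z a) \<bullet> (G (\<Psi> (Z a)) (W a) - g (\<Psi> (Z a))))"
    and "(\<integral>a. \<Phi> (Z a) \<bullet> (G (\<Psi> (Z a)) (W a) - g (\<Psi> (Z a))) \<partial>M) = 0"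
proof -
  note g_meas[measurable]
  define \<Phi>' where "\<Phi>' z = (if norm (\<Phi> z) \<le> Bd then \<Phi> z else 0)" for z
  define h where "h p = \<Phi>' (fst p) \<bullet> (G (\<Psi> (fst p)) (snd p) - g (\<Psi> (fst p)))" for p
  have [measurable]: "\<Phi>' \<in> borel_measurable S"
    unfolding \<Phi>'_def by measurable
  have h_meas[measurable]: "h \<in> borel_measurable (S \<Otimes>\<^sub>M P)"
    unfolding h_def by measurable
  have h_int: "integrable (Q \<Otimes>\<^sub>M P) h"
    unfolding h_def by (rule integrable_inner_error_pair[where Bd = Bd]) (simp_all add: \<Phi>'_def Bd)
  have h_ZW: "h (Z a, W a) = \<Phi> (Z a) \<bullet> (G (\<Psi> (Z a)) (W a) - g (\<Psi> (Z a)))"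
    if "a \<in> space M" for a
    using bd[OF that] by (simp add: h_def \<Phi>'_def)
  have "integrable M (\<lambda>a. h (Z a, W a))"
    using h_int integrable_distr_eq[OF measurable_ZW h_meas] by (simp add: distr_ZW)
  then show "integrable M (\<lambda>a. \<Phi> (Z a) \<bullet> (G (\<Psi> (Z a)) (W a) - g (\<Psi> (Z a))))"
    by (rule Bochner_Integration.integrable_cong[THEN iffD1, rotated 2]) (simp_all add: h_ZW)
  have "(\<integral>a. \<Phi> (Z a) \<bullet> (G (\<Psi> (Z a)) (W a) - g (\<Psi> (Z a))) \<partial>M) = (\<integral>a. h (Z a, W a) \<partial>M)"
    by (rule Bochner_Integration.integral_cong) (simp_all add: h_ZW)
  also have "\<dots> = integral\<^sup>L (Q \<Otimes>\<^sub>M P) h"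
    by (simp add: integral_distr[OF measurable_ZW h_meas, symmetric] distr_ZW)
  also have "\<dots> = (\<integral>z. \<integral>s. h (z, s) \<partial>P \<partial>Q)"
    by (rule QP.integral_fst'[OF h_int, symmetric])
  also have "\<dots> = 0"
    using G_int by (simp add: h_def integral_oracle_error)
  finally show "(\<integral>a. \<Phi> (Z a) \<bullet> (G (\<Psi> (Z a)) (W a) - g (\<Psi> (Z a))) \<partial>M) = 0" .
qed

end

section \<open>Nonnegative supermartingales\<close>

locale nonneg_supermartingale = prob_space M + filtration "space M" F
  for M :: "'a measure" and F :: "nat \<Rightarrow> 'a measure" +
  fixes X :: "nat \<Rightarrow> 'a \<Rightarrow> real"
  assumes sets_F_subset: "\<And>n. sets (F n) \<subseteq> sets M"
    and adapted: "\<And>n. X n \<in> borel_measurable (F n)"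
    and integrable_X: "\<And>n. integrable M (X n)"
    and nonneg: "\<And>n a. a \<in> space M \<Longrightarrow> 0 \<le> X n a"
    and supermartingale: "\<And>n Y. Y \<in> sets (F n) \<Longrightarrow>
      (\<integral>a. indicator Y a * X (Suc n) a \<partial>M) \<le> (\<integral>a. indicator Y a * X n a \<partial>M)"
begin

lemma adapted_mono: "j \<le> n \<Longrightarrow> X j \<in> borel_measurable (F n)"
  by (rule measurable_from_subalg[OF _ adapted])
     (simp add: subalgebra_def space_F sets_F_mono)

lemma borel_measurable_X[measurable]: "X n \<in> borel_measurable M"
  by (rule measurable_from_subalg[OF _ adapted])
     (simp add: subalgebra_def space_F sets_F_subset)

lemma integrable_indicator_X: "Y \<in> sets M \<Longrightarrow> integrable M (\<lambda>a. indicator Y a * X n a)"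
  using integrable_mult_indicator[OF _ integrable_X] by simp

lemma integral_indicator_X_nonneg: "0 \<le> (\<integral>a. indicator Y a * X n a \<partial>M)"
  by (rule integral_nonneg_AE) (simp add: nonneg)

lemma integral_indicator_X_split:
  assumes "Y \<in> sets M" "E \<in> sets M"
  shows "(\<integral>a. indicator Y a * X n a \<partial>M)
    = (\<integral>a. indicator (Y \<inter> E) a * X n a \<partial>M) + (\<integral>a. indicator (Y - E) a * X n a \<partial>M)"
proof -
  have "(\<integral>a. indicator Y a * X n a \<partial>M)
      = (\<integral>a. indicator (Y \<inter> E) a * X n a + indicator (Y - E) a * X n a \<partial>M)"
    by (rule Bochner_Integration.integral_cong) (auto simp: indicator_def)
  then show ?thesis
    using assms by (simp add: integrable_indicator_X)
qed

lemma markov_indicator: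
  assumes "E \<in> sets M" "\<And>a. a \<in> E \<Longrightarrow> c \<le> X n a"
  shows "c * prob E \<le> (\<integral>a. indicator E a * X n a \<partial>M)"
proof -
  have "c * prob E = (\<integral>a. c * indicator E a \<partial>M)"
    unfolding integral_mult_right_zero using assms(1) by (simp add: Int_absorb1)
  also have "\<dots> \<le> (\<integral>a. indicator E a * X n a \<partial>M)"
  proof (rule integral_mono)
    show "integrable M (\<lambda>a. c * indicator E a)"
      using assms(1) by (simp add: emeasure_eq_measure)
    show "integrable M (\<lambda>a. indicator E a * X n a)"
      by (rule integrable_indicator_X[OF assms(1)])
    show "c * indicator E a \<le> indicator E a * X n a" for a
      using assms(2) by (auto simp: indicator_def)
  qed
  finally show ?thesis .
qed

lemma maximal_inequality:
  assumes c: "0 < c"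
  shows "c * prob {a \<in> space M. \<exists>j\<in>{m..m + t}. c \<le> X j a} \<le> expectation (X m)"
proof -
  define Ex where "Ex t = {a \<in> space M. \<exists>j\<in>{m..m + t}. c \<le> X j a}" for t
  define All where "All t = {a \<in> space M. \<forall>j\<in>{m..m + t}. X j a < c}" for t
  have All_F: "All t \<in> sets (F (m + t))" for t
  proof -
    have X_lt: "X j -` {..<c} \<inter> space (F N) \<in> sets (F N)" if "j \<le> N" for j N
      by (rule measurable_sets[OF adapted_mono[OF that]]) simp
    have "All t = (\<Inter>j\<in>{m..m + t}. X j -` {..<c} \<inter> space (F (m + t)))"
      by (auto simp: All_def space_F)
    also have "\<dots> \<in> sets (F (m + t))"
      by (intro sets.finite_INT X_lt) auto
    finally show ?thesis .
  qed
  have Ex_M: "Ex t \<in> sets M" for t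
    unfolding Ex_def by measurable
  have "c * prob (Ex t) + (\<integral>a. indicator (All t) a * X (m + t) a \<partial>M) \<le> expectation (X m)"
  proof (induction t)
    case 0
    have "expectation (X m) = (\<integral>a. indicator (space M) a * X m a \<partial>M)"
      by (intro Bochner_Integration.integral_cong) auto
    also have "\<dots> = (\<integral>a. indicator (Ex 0) a * X m a \<partial>M) + (\<integral>a. indicator (All 0) a * X m a \<partial>M)"
    proof -
      have "space M \<inter> Ex 0 = Ex 0" "space M - Ex 0 = All 0"
        by (auto simp: Ex_def All_def)
      then show ?thesis
        using integral_indicator_X_split[OF sets.top Ex_M[of 0], of m] by (simp only:)
    qed
    finally show ?case
      using markov_indicator[OF Ex_M[of 0], where c = c and n = m] by (auto simp: Ex_def)
  next
    case (Suc t)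
    define E where "E = {a \<in> space M. c \<le> X (Suc (m + t)) a}"
    have E_M: "E \<in> sets M"
      unfolding E_def by measurable
    have All_M: "All t \<in> sets M"
      using All_F sets_F_subset by blast
    have "Ex (Suc t) = Ex t \<union> (All t \<inter> E)" "Ex t \<inter> (All t \<inter> E) = {}"
      by (auto simp: Ex_def All_def E_def atLeastAtMostSuc_conv not_le)
    then have "prob (Ex (Suc t)) = prob (Ex t) + prob (All t \<inter> E)"
      using Ex_M All_M E_M by (simp add: finite_measure_Union)
    moreover have "All (Suc t) = All t - E"
      by (auto simp: All_def E_def atLeastAtMostSuc_conv not_le)
    moreover have "c * prob (All t \<inter> E) \<le> (\<integral>a. indicator (All t \<inter> E) a * X (Suc (m + t)) a \<partial>M)"
      using All_M E_M by (intro markov_indicator) (auto simp: E_def)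
    moreover have "(\<integral>a. indicator (All t) a * X (Suc (m + t)) a \<partial>M)
        \<le> (\<integral>a. indicator (All t) a * X (m + t) a \<partial>M)"
      by (rule supermartingale[OF All_F])
    ultimately show ?case
      using Suc.IH integral_indicator_X_split[OF All_M E_M, of "Suc (m + t)"]
      by (simp add: algebra_simps)
  qed
  then show ?thesis
    using integral_indicator_X_nonneg[of "All t" "m + t"] by (simp add: Ex_def)
qed

lemma AE_tendsto_zero:
  assumes lim: "(\<lambda>n. expectation (X n)) \<longlonglongrightarrow> 0"
  shows "AE a in M. (\<lambda>n. X n a) \<longlonglongrightarrow> 0"
proof -
  have "AE a in M. \<forall>\<^sub>F n in sequentially. X n a < c" if c: "0 < c" for c
  proof -
    define Bad where "Bad = {a \<in> space M. \<forall>m. \<exists>j\<ge>m. c \<le> X j a}"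
    have Bad_M: "Bad \<in> sets M"
      unfolding Bad_def by measurable
    have "prob Bad \<le> expectation (X m) / c" for m
    proof -
      let ?Ex = "\<lambda>t. {a \<in> space M. \<exists>j\<in>{m..m + t}. c \<le> X j a}"
      have "Bad \<subseteq> (\<Union>t. ?Ex t)"
      proof
        fix a assume "a \<in> Bad"
        then obtain j where "m \<le> j" "c \<le> X j a" "a \<in> space M"
          unfolding Bad_def by blast
        then have "a \<in> ?Ex (j - m)"
          by auto
        then show "a \<in> (\<Union>t. ?Ex t)"
          by blast
      qed
      then have "prob Bad \<le> prob (\<Union>t. ?Ex t)"
        by (intro finite_measure_mono) auto
      also have "\<dots> \<le> expectation (X m) / c"
      proof (rule LIMSEQ_le_const2)
        show "(\<lambda>t. prob (?Ex t)) \<longlonglongrightarrow> prob (\<Union>t. ?Ex t)"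
          by (intro finite_Lim_measure_incseq) (auto simp: incseq_def)
        show "\<exists>N. \<forall>t\<ge>N. prob (?Ex t) \<le> expectation (X m) / c"
          using maximal_inequality[OF c, of m] c by (simp add: field_simps)
      qed
      finally show ?thesis .
    qed
    moreover have "(\<lambda>m. expectation (X m) / c) \<longlonglongrightarrow> 0"
      using tendsto_divide_zero[OF lim] by simp
    ultimately have "prob Bad \<le> 0"
      by (intro LIMSEQ_le_const[of "\<lambda>m. expectation (X m) / c"]) auto
    then have "Bad \<in> null_sets M"
      using Bad_M measure_nonneg[of M Bad] by (simp add: emeasure_eq_measure null_sets_def)
    then show ?thesis
      by (rule AE_I') (auto simp: Bad_def eventually_sequentially not_less)
  qed
  then have "AE a in M. \<forall>i. \<forall>\<^sub>F n in sequentially. X n a < 1 / Suc i"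
    by (subst AE_all_countable) auto
  then show ?thesis
  proof (rule AE_mp, intro AE_I2 impI)
    fix a assume a: "a \<in> space M" and ev: "\<forall>i. \<forall>\<^sub>F n in sequentially. X n a < 1 / Suc i"
    show "(\<lambda>n. X n a) \<longlonglongrightarrow> 0"
    proof (rule order_tendstoI)
      fix e :: real assume "0 < e"
      then obtain i where "1 / Suc i < e"
        using nat_approx_posE by blast
      then show "\<forall>\<^sub>F n in sequentially. X n a < e"
        using ev[rule_format, of i] by (auto elim: eventually_mono)
    next
      fix e :: real assume "e < 0"
      then show "\<forall>\<^sub>F n in sequentially. e < X n a"
        using nonneg[OF a] by (intro always_eventually allI) (rule less_le_trans)
    qed
  qed
qed

end

section \<open>The reflected stochastic gradient iteration\<close>

locale saddle_sgd =
  fixes g :: "real^'n \<Rightarrow> real^'n" and H :: "real^'n \<Rightarrow> real^'n^'n"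
    and k :: nat and xs :: "real^'n" and \<delta> L \<mu> Mlip \<theta> \<sigma> r :: real
    and \<alpha> :: "nat \<Rightarrow> real" and M :: "'a measure" and P :: "'b measure"
    and G :: "real^'n \<Rightarrow> 'b \<Rightarrow> real^'n" and \<omega> :: "nat \<Rightarrow> 'a \<Rightarrow> 'b"
    and x :: "nat \<Rightarrow> 'a \<Rightarrow> real^'n" and V :: "nat \<Rightarrow> nat \<Rightarrow> 'a \<Rightarrow> real^'n"
  assumes hess: "\<And>y. (g has_derivative (\<lambda>h. H y *v h)) (at y)"
    and crit: "g xs = 0"
    and spec: "\<And>y. norm (y - xs) \<le> \<delta> \<Longrightarrow> saddle_spectrum (H y) k \<mu> L"
    and lip: "\<And>y z. norm (y - xs) \<le> \<delta> \<Longrightarrow> norm (z - xs) \<le> \<delta> \<Longrightarrow>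
      mat_opnorm (H y - H z) \<le> Mlip * norm (y - z)"
    and k_le: "k \<le> CARD('n)" and \<mu>_nonneg: "0 \<le> \<mu>" and L_nonneg: "0 \<le> L"
    and Mlip_nonneg: "0 \<le> Mlip"
    and r_nonneg: "0 \<le> r" and r_le: "r \<le> \<delta>"
    and radius_small: "Mlip * r < \<mu> - 2 * sqrt \<theta> * L"
    and \<alpha>_pos: "\<And>n. 0 < \<alpha> n" and \<alpha>_nsum: "\<not> summable \<alpha>"
    and \<alpha>_sq: "summable (\<lambda>n. (\<alpha> n)\<^sup>2)"
    and M_prob: "prob_space M" and P_prob: "prob_space P"
    and G_meas: "(\<lambda>(y, s). G y s) \<in> borel_measurable (borel \<Otimes>\<^sub>M P)"
    and G_int: "\<And>y. integrable P (G y)"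
    and G_unbiased: "\<And>y. (\<integral>s. G y s \<partial>P) = g y"
    and G_var: "\<And>y. (\<integral>\<^sup>+ s. ennreal ((norm (G y s - g y))\<^sup>2) \<partial>P) \<le> ennreal (\<sigma>\<^sup>2)"
    and \<omega>_meas: "\<And>n. \<omega> n \<in> measurable M P"
    and \<omega>_distr: "\<And>n. distr M P (\<omega> n) = P"
    and x_meas: "\<And>n. x n \<in> borel_measurable M"
    and V_meas: "\<And>n i. V n i \<in> borel_measurable M"
    and \<omega>_indep: "\<And>n. prob_space.indep_set M
      (sets (vimage_algebra (space M) (\<omega> n) P))
      (sets (vimage_algebra (space M)
        (\<lambda>a. (restrict (\<lambda>j. x j a) {..n}, restrict (\<lambda>i. V n i a) {..<k}))
        (Pi\<^sub>M {..n} (\<lambda>_. borel) \<Otimes>\<^sub>M Pi\<^sub>M {..<k} (\<lambda>_. borel))))"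
    and V_orth: "\<And>n a. a \<in> space M \<Longrightarrow> orthonormal_fam k (\<lambda>i. V n i a)"
    and V_approx: "\<And>n a. a \<in> space M \<Longrightarrow> x n a \<in> cball xs r \<Longrightarrow>
      \<exists>v. bottom_eigvecs (H (x n a)) k v \<and>
        (mat_opnorm ((\<Sum>i<k. outer (V n i a)) - (\<Sum>i<k. outer (v i))))\<^sup>2 \<le> \<theta>"
    and iter: "\<And>n a. a \<in> space M \<Longrightarrow>
      x (Suc n) a = x n a - \<alpha> n *\<^sub>R ((mat 1 - 2 *\<^sub>R (\<Sum>i<k. outer (V n i a))) *v G (x n a) (\<omega> n a))"
begin

sublocale M: prob_space M
  by (rule M_prob)

lemma g_meas[measurable]: "g \<in> borel_measurable borel"
  using has_derivative_continuous[OF hess]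
  by (intro borel_measurable_continuous_onI continuous_at_imp_continuous_on) auto

sublocale est: unbiased_oracle P G g \<sigma>
  using P_prob G_meas g_meas G_int G_unbiased G_var
  by (intro unbiased_oracle.intro unbiased_oracle_axioms.intro)

definition rate where "rate = \<mu> - 2 * sqrt \<theta> * L - Mlip * r"

definition grad_bound where "grad_bound = L * r + Mlip * r\<^sup>2"

definition K where "K = 2 * grad_bound\<^sup>2 + 2 * \<sigma>\<^sup>2"

definition stayed where "stayed n = {a \<in> space M. \<forall>j\<le>n. x j a \<in> cball xs r}"

definition dist2 where "dist2 n a = (norm (x n a - xs))\<^sup>2"

definition W where "W n a = indicator (stayed n) a * dist2 n a"

definition noise where "noise n a = G (x n a) (\<omega> n a) - g (x n a)"

definition refl_dev where "refl_dev n a = refl_fam k (\<lambda>i. V n i a) (x n a - xs)"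

lemma rate_pos: "0 < rate"
  using radius_small by (simp add: rate_def)

lemma near_saddle_bounds:
  assumes a: "a \<in> space M" and x: "x n a \<in> cball xs r"
  shows "rate * dist2 n a \<le> refl_dev n a \<bullet> g (x n a)"
    and "norm (g (x n a)) \<le> grad_bound"
proof -
  have e: "norm (x n a - xs) \<le> r"
    using x by (simp add: dist_norm norm_minus_commute)
  then have e_\<delta>: "norm (x n a - xs) \<le> \<delta>"
    using r_le by linarith
  obtain v where v: "bottom_eigvecs (H (x n a)) k v"
    "(mat_opnorm ((\<Sum>i<k. outer (V n i a)) - (\<Sum>i<k. outer (v i))))\<^sup>2 \<le> \<theta>"
    using V_approx[OF a x] by blast
  have "rate * dist2 n a
      \<le> (\<mu> - 2 * sqrt \<theta> * L - Mlip * norm (x n a - xs)) * (norm (x n a - xs))\<^sup>2"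
    unfolding rate_def dist2_def
    using e Mlip_nonneg by (intro mult_right_mono) (auto intro: mult_left_mono)
  also have "\<dots> \<le> refl_dev n a \<bullet> g (x n a)"
    unfolding refl_dev_def
    by (rule refl_inner_grad_near_saddle_ge[OF hess crit lip Mlip_nonneg \<mu>_nonneg e_\<delta>
          spec[OF e_\<delta>] k_le V_orth[OF a] v])
  finally show "rate * dist2 n a \<le> refl_dev n a \<bullet> g (x n a)" .
  have "norm (g (x n a)) \<le> L * norm (x n a - xs) + Mlip * (norm (x n a - xs))\<^sup>2"
    by (rule norm_grad_near_saddle_le[OF hess crit lip Mlip_nonneg \<mu>_nonneg e_\<delta> spec[OF e_\<delta>]])
  also have "\<dots> \<le> grad_bound"
    unfolding grad_bound_def
    using e L_nonneg Mlip_nonneg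
    by (intro add_mono mult_left_mono power_mono) simp_all
  finally show "norm (g (x n a)) \<le> grad_bound" .
qed

text \<open>The reflection is an isometry, so the step length is controlled by the size of the
  stochastic gradient alone, and the cross term splits into the deterministic descent term and
  a noise term with mean zero.\<close>
lemma dist2_Suc_le:
  assumes a: "a \<in> stayed n"
  shows "dist2 (Suc n) a \<le> (1 - 2 * \<alpha> n * rate) * dist2 n a - 2 * \<alpha> n * (refl_dev n a \<bullet> noise n a)
    + (\<alpha> n)\<^sup>2 * (2 * grad_bound\<^sup>2 + 2 * (norm (noise n a))\<^sup>2)"
proof -
  have aM: "a \<in> space M" and x: "x n a \<in> cball xs r"
    using a by (auto simp: stayed_def)
  define e where "e = x n a - xs"
  define R where "R = refl_fam k (\<lambda>i. V n i a)"
  define \<gamma> where "\<gamma> = g (x n a)"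
  define \<xi> where "\<xi> = noise n a"
  have R_norm: "norm (R w) = norm w" for w
    unfolding R_def by (rule norm_refl_fam[OF V_orth[OF aM]])
  have "x (Suc n) a - xs = e - \<alpha> n *\<^sub>R R (\<gamma> + \<xi>)"
    using iter[OF aM, of n] by (simp add: reflection_mult_vec e_def R_def \<gamma>_def \<xi>_def noise_def)
  then have "dist2 (Suc n) a = (norm (e - \<alpha> n *\<^sub>R R (\<gamma> + \<xi>)))\<^sup>2"
    by (simp add: dist2_def)
  also have "\<dots> = (norm e)\<^sup>2 - 2 * \<alpha> n * (e \<bullet> R (\<gamma> + \<xi>)) + (\<alpha> n)\<^sup>2 * (norm (R (\<gamma> + \<xi>)))\<^sup>2"
    unfolding power2_norm_eq_inner
    by (simp add: power2_eq_square
        inner_commute[of "R (\<gamma> + \<xi>)" e] algebra_simps)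
  finally have step: "dist2 (Suc n) a
      = (norm e)\<^sup>2 - 2 * \<alpha> n * (e \<bullet> R (\<gamma> + \<xi>)) + (\<alpha> n)\<^sup>2 * (norm (\<gamma> + \<xi>))\<^sup>2"
    by (simp only: R_norm)
  have cross: "e \<bullet> R (\<gamma> + \<xi>) = R e \<bullet> \<gamma> + R e \<bullet> \<xi>"
    by (simp add: R_def inner_refl_fam_commute inner_add_right)
  have "\<alpha> n * (rate * (norm e)\<^sup>2) \<le> \<alpha> n * (R e \<bullet> \<gamma>)"
    using near_saddle_bounds(1)[OF aM x] \<alpha>_pos[of n]
    by (simp add: dist2_def e_def R_def \<gamma>_def refl_dev_def)
  moreover have "(\<alpha> n)\<^sup>2 * (norm (\<gamma> + \<xi>))\<^sup>2 \<le> (\<alpha> n)\<^sup>2 * (2 * grad_bound\<^sup>2 + 2 * (norm \<xi>)\<^sup>2)"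
  proof (rule mult_left_mono)
    have "(norm (\<gamma> + \<xi>))\<^sup>2 \<le> (norm \<gamma> + norm \<xi>)\<^sup>2"
      by (simp add: power_mono norm_triangle_ineq)
    also have "\<dots> \<le> 2 * (norm \<gamma>)\<^sup>2 + 2 * (norm \<xi>)\<^sup>2"
      using zero_le_power2[of "norm \<gamma> - norm \<xi>"] by (simp add: power2_sum power2_diff)
    also have "(norm \<gamma>)\<^sup>2 \<le> grad_bound\<^sup>2"
      using near_saddle_bounds(2)[OF aM x] by (simp add: \<gamma>_def power_mono)
    finally show "(norm (\<gamma> + \<xi>))\<^sup>2 \<le> 2 * grad_bound\<^sup>2 + 2 * (norm \<xi>)\<^sup>2"
      by simp
  qed simp
  ultimately show ?thesis
    unfolding step cross
    by (simp add: dist2_def e_def R_def \<xi>_def refl_dev_def algebra_simps)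
qed

definition hist where "hist n a = restrict (\<lambda>j. x j a) {..n}"

definition F where "F n = vimage_algebra (space M) (hist n) (Pi\<^sub>M {..n} (\<lambda>_. borel))"

lemma measurable_hist[measurable]: "hist n \<in> measurable M (Pi\<^sub>M {..n} (\<lambda>_. borel))"
  unfolding hist_def by (rule measurable_restrict) (simp add: x_meas)

lemma space_F[simp]: "space (F n) = space M"
  by (simp add: F_def)

lemma sets_F: "sets (F n) = {hist n -` B \<inter> space M | B. B \<in> sets (Pi\<^sub>M {..n} (\<lambda>_. borel))}"
  unfolding F_def by (rule sets_vimage_algebra2) (auto simp: hist_def space_PiM)

lemma sets_F_subset: "sets (F n) \<subseteq> sets M"
  unfolding sets_F by auto

lemma measurable_x_F:
  assumes "j \<le> n"
  shows "x j \<in> borel_measurable (F n)"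
proof -
  have "hist n \<in> measurable (F n) (Pi\<^sub>M {..n} (\<lambda>_. borel))"
    unfolding F_def by (rule measurable_vimage_algebra1) (auto simp: hist_def space_PiM)
  from measurable_compose[OF this measurable_component_singleton[of j]] assms
  show ?thesis
    by (simp add: hist_def)
qed

sublocale hist_filtration: filtration "space M" F
proof
  fix m n :: nat assume "m \<le> n"
  have "hist m \<in> measurable (F n) (Pi\<^sub>M {..m} (\<lambda>_. borel))"
    unfolding hist_def using \<open>m \<le> n\<close> by (intro measurable_restrict measurable_x_F) auto
  then show "sets (F m) \<subseteq> sets (F n)"
    unfolding sets_F[of m] using measurable_sets[of "hist m" "F n"] by auto
qed simp

lemma stayed_in_F:
  assumes "j \<le> n"
  shows "stayed j \<in> sets (F n)"
proof -
  have "stayed j = (\<Inter>i\<in>{..j}. x i -` cball xs r \<inter> space (F n))"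
    by (auto simp: stayed_def)
  also have "\<dots> \<in> sets (F n)"
    using assms by (intro sets.finite_INT measurable_sets[OF measurable_x_F]) auto
  finally show ?thesis .
qed

lemma measurable_W_F: "W n \<in> borel_measurable (F n)"
proof -
  have "dist2 n \<in> borel_measurable (F n)"
    unfolding dist2_def using measurable_x_F[of n n] by measurable
  then show ?thesis
    unfolding W_def using stayed_in_F[of n n] by measurable
qed

lemma measurable_noise[measurable]: "noise n \<in> borel_measurable M"
proof -
  have "(\<lambda>a. (x n a, \<omega> n a)) \<in> measurable M (borel \<Otimes>\<^sub>M P)"
    by (intro measurable_Pair x_meas \<omega>_meas)
  from measurable_compose[OF this G_meas] have "(\<lambda>a. G (x n a) (\<omega> n a)) \<in> borel_measurable M"
    by simp
  then show ?thesis
    unfolding noise_def by (intro borel_measurable_diff measurable_compose[OF x_meas g_meas])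
qed

definition info where "info n a = (hist n a, restrict (\<lambda>i. V n i a) {..<k})"

definition info_space :: "nat \<Rightarrow> ((nat \<Rightarrow> real^'n) \<times> (nat \<Rightarrow> real^'n)) measure" where
  "info_space n = Pi\<^sub>M {..n} (\<lambda>_. borel) \<Otimes>\<^sub>M Pi\<^sub>M {..<k} (\<lambda>_. borel)"

lemma indep_query: "indep_oracle_query P G g \<sigma> M (info_space n) (info n) (\<omega> n)"
proof (rule indep_oracle_query.intro[OF est.unbiased_oracle_axioms M.prob_space_axioms],
    unfold_locales)
  show "info n \<in> measurable M (info_space n)"
    unfolding info_def info_space_def
    by (intro measurable_Pair measurable_hist measurable_restrict) (simp add: V_meas)
  have "info n = (\<lambda>a. (restrict (\<lambda>j. x j a) {..n}, restrict (\<lambda>i. V n i a) {..<k}))"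
    by (simp add: fun_eq_iff info_def hist_def)
  then show "M.indep_set (sets (vimage_algebra (space M) (\<omega> n) P))
      (sets (vimage_algebra (space M) (info n) (info_space n)))"
    using \<omega>_indep[of n] by (simp add: info_space_def)
qed (simp_all add: \<omega>_meas \<omega>_distr)

lemma F_eq_info_preimage:
  assumes "Y \<in> sets (F n)"
  obtains B where "B \<in> sets (info_space n)" "info n -` B \<inter> space M = Y"
proof -
  obtain B0 where B0: "B0 \<in> sets (Pi\<^sub>M {..n} (\<lambda>_. borel))" "Y = hist n -` B0 \<inter> space M"
    using assms unfolding sets_F by auto
  show ?thesis
  proof
    show "B0 \<times> space (Pi\<^sub>M {..<k} (\<lambda>_. borel)) \<in> sets (info_space n)"
      unfolding info_space_def using B0(1) by (intro pair_measureI) auto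
    show "info n -` (B0 \<times> space (Pi\<^sub>M {..<k} (\<lambda>_. borel))) \<inter> space M = Y"
      using B0(2) by (auto simp: info_def space_PiM)
  qed
qed

lemma proj_fam_restrict: "proj_fam k (restrict v {..<k}) = proj_fam k v"
  by (simp add: fun_eq_iff proj_fam_def)

lemma integral_cross_noise_eq_0:
  assumes Y: "Y \<in> sets (F n)" "Y \<subseteq> stayed n"
  shows "integrable M (\<lambda>a. indicator Y a * (refl_dev n a \<bullet> noise n a))"
    and "(\<integral>a. indicator Y a * (refl_dev n a \<bullet> noise n a) \<partial>M) = 0"
proof -
  interpret Q: indep_oracle_query P G g \<sigma> M "info_space n" "info n" "\<omega> n"
    by (rule indep_query)
  obtain B where B: "B \<in> sets (info_space n)" "info n -` B \<inter> space M = Y"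
    using F_eq_info_preimage[OF Y(1)] by blast
  define \<Phi> where "\<Phi> z = indicator B z *\<^sub>R refl_fam k (snd z) (fst z n - xs)" for z
  define \<Psi> where "\<Psi> z = fst z n" for z :: "(nat \<Rightarrow> real^'n) \<times> (nat \<Rightarrow> real^'n)"
  have [measurable]: "\<Psi> \<in> borel_measurable (info_space n)"
    unfolding \<Psi>_def info_space_def by measurable
  have "(\<lambda>z. refl_fam k (snd z) (fst z n - xs)) \<in> borel_measurable (info_space n)"
  proof -
    have x: "(\<lambda>z. fst z n) \<in> borel_measurable (info_space n)"
      unfolding info_space_def by measurable
    then have e: "(\<lambda>z. fst z n - xs) \<in> borel_measurable (info_space n)"
      by measurable
    have v: "(\<lambda>z. snd z i) \<in> borel_measurable (info_space n)" if "i \<in> {..<k}" for i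
      unfolding info_space_def
      by (rule measurable_compose[OF measurable_snd measurable_component_singleton[OF that]])
    have "(\<lambda>z. \<Sum>i<k. (snd z i \<bullet> (fst z n - xs)) *\<^sub>R snd z i) \<in> borel_measurable (info_space n)"
      using e v by (intro borel_measurable_sum borel_measurable_scaleR borel_measurable_inner)
    then show ?thesis
      unfolding refl_fam_def proj_fam_def using x
      by (intro borel_measurable_diff borel_measurable_scaleR) simp_all
  qed
  then have [measurable]: "\<Phi> \<in> borel_measurable (info_space n)"
    unfolding \<Phi>_def using B(1) by measurable
  have \<Phi>_info: "\<Phi> (info n a) = indicator Y a *\<^sub>R refl_dev n a" if "a \<in> space M" for a
    using B(2) that
    by (auto simp: \<Phi>_def info_def hist_def refl_dev_def refl_fam_def proj_fam_restrict
        indicator_def)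
  have "norm (\<Phi> (info n a)) \<le> r" if "a \<in> space M" for a
    using Y(2) that r_nonneg norm_refl_fam[OF V_orth[OF that]]
    by (auto simp: \<Phi>_info refl_dev_def stayed_def dist_norm norm_minus_commute indicator_def)
  note * = Q.integral_inner_error_eq_0[of \<Phi> \<Psi>, OF _ _ this r_nonneg]
  have eq: "\<Phi> (info n a) \<bullet> (G (\<Psi> (info n a)) (\<omega> n a) - g (\<Psi> (info n a)))
      = indicator Y a * (refl_dev n a \<bullet> noise n a)" if "a \<in> space M" for a
    using \<Phi>_info[OF that] by (simp add: \<Psi>_def info_def hist_def noise_def)
  show "integrable M (\<lambda>a. indicator Y a * (refl_dev n a \<bullet> noise n a))"
    using *(1) by (rule Bochner_Integration.integrable_cong[THEN iffD1, rotated 2]) (simp_all add: eq)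
  show "(\<integral>a. indicator Y a * (refl_dev n a \<bullet> noise n a) \<partial>M) = 0"
    using *(2) by (simp add: eq cong: Bochner_Integration.integral_cong)
qed

lemma integral_sq_noise_le:
  assumes Y: "Y \<in> sets (F n)"
  shows "integrable M (\<lambda>a. indicator Y a * (norm (noise n a))\<^sup>2)"
    and "(\<integral>a. indicator Y a * (norm (noise n a))\<^sup>2 \<partial>M) \<le> \<sigma>\<^sup>2 * M.prob Y"
proof -
  interpret Q: indep_oracle_query P G g \<sigma> M "info_space n" "info n" "\<omega> n"
    by (rule indep_query)
  obtain B where B: "B \<in> sets (info_space n)" "info n -` B \<inter> space M = Y"
    using F_eq_info_preimage[OF Y] by blast
  have YM: "Y \<in> sets M"
    using Y sets_F_subset by blast
  have meas: "(\<lambda>a. indicator Y a * (norm (noise n a))\<^sup>2) \<in> borel_measurable M"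
    using YM by measurable
  have "(\<integral>\<^sup>+a. ennreal (indicator Y a * (norm (noise n a))\<^sup>2) \<partial>M)
      = (\<integral>\<^sup>+a. indicator B (info n a)
          * ennreal ((norm (G (fst (info n a) n) (\<omega> n a) - g (fst (info n a) n)))\<^sup>2) \<partial>M)"
    using B(2) by (intro nn_integral_cong) (auto simp: info_def hist_def noise_def indicator_def)
  also have "\<dots> \<le> ennreal (\<sigma>\<^sup>2) * emeasure M Y"
    using Q.nn_integral_sq_error_le[of "\<lambda>z. fst z n" B] B by (simp add: info_space_def)
  finally have nn: "(\<integral>\<^sup>+a. ennreal (indicator Y a * (norm (noise n a))\<^sup>2) \<partial>M) \<le> ennreal (\<sigma>\<^sup>2 * M.prob Y)"
    by (simp add: M.emeasure_eq_measure ennreal_mult)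
  show int: "integrable M (\<lambda>a. indicator Y a * (norm (noise n a))\<^sup>2)"
  proof (rule integrableI_nonneg[OF meas])
    show "(\<integral>\<^sup>+a. ennreal (indicator Y a * (norm (noise n a))\<^sup>2) \<partial>M) < \<infinity>"
      using nn by (simp add: order_le_less_trans)
  qed simp
  have "ennreal (\<integral>a. indicator Y a * (norm (noise n a))\<^sup>2 \<partial>M) \<le> ennreal (\<sigma>\<^sup>2 * M.prob Y)"
    using nn by (subst nn_integral_eq_integral[OF int, symmetric]) simp_all
  then show "(\<integral>a. indicator Y a * (norm (noise n a))\<^sup>2 \<partial>M) \<le> \<sigma>\<^sup>2 * M.prob Y"
    by simp
qed

lemma W_nonneg: "0 \<le> W n a"
  by (simp add: W_def dist2_def)

lemma W_le: "W n a \<le> r\<^sup>2"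
proof (cases "a \<in> stayed n")
  case True
  then have "norm (x n a - xs) \<le> r"
    by (auto simp: stayed_def dist_norm norm_minus_commute)
  then show ?thesis
    using True by (simp add: W_def dist2_def power_mono)
qed (simp add: W_def)

lemma measurable_W[measurable]: "W n \<in> borel_measurable M"
  by (rule measurable_from_subalg[OF _ measurable_W_F]) (simp add: subalgebra_def sets_F_subset)

lemma integrable_W: "integrable M (W n)"
  using W_nonneg W_le by (intro M.integrable_const_bound[where B = "r\<^sup>2"]) auto

lemma integrable_indicator_W: "Y \<in> sets M \<Longrightarrow> integrable M (\<lambda>a. indicator Y a * W n a)"
  using integrable_mult_indicator[OF _ integrable_W] by simp

lemma integral_W_Suc_le:
  assumes Y: "Y \<in> sets (F n)"
  shows "(\<integral>a. indicator Y a * W (Suc n) a \<partial>M)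
    \<le> (1 - 2 * \<alpha> n * rate) * (\<integral>a. indicator Y a * W n a \<partial>M) + (\<alpha> n)\<^sup>2 * K * M.prob Y"
proof -
  define Y' where "Y' = Y \<inter> stayed n"
  have Y'_F: "Y' \<in> sets (F n)"
    unfolding Y'_def using Y stayed_in_F[of n n] by auto
  then have Y'_M: "Y' \<in> sets M" and Y_M: "Y \<in> sets M"
    using Y sets_F_subset by auto
  note cross = integral_cross_noise_eq_0[OF Y'_F, unfolded Y'_def, simplified, folded Y'_def]
  note sq = integral_sq_noise_le[OF Y'_F]
  define f where "f a = (1 - 2 * \<alpha> n * rate) * (indicator Y a * W n a)
    - 2 * \<alpha> n * (indicator Y' a * (refl_dev n a \<bullet> noise n a))
    + (\<alpha> n)\<^sup>2 * (2 * grad_bound\<^sup>2 * indicator Y' a + 2 * (indicator Y' a * (norm (noise n a))\<^sup>2))"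
    for a
  have int_f: "integrable M f"
    unfolding f_def using cross(1) sq(1) Y'_M integrable_indicator_W[OF Y_M]
    by (auto simp: Y'_def M.emeasure_eq_measure)
  have "indicator Y a * W (Suc n) a \<le> f a" if "a \<in> space M" for a
  proof (cases "a \<in> Y'")
    case True
    then have "indicator Y a * W (Suc n) a \<le> dist2 (Suc n) a"
      by (simp add: Y'_def W_def indicator_def dist2_def)
    also have "\<dots> \<le> f a"
      using dist2_Suc_le[of a n] True by (simp add: f_def Y'_def W_def)
    finally show ?thesis .
  next
    case False
    then have "a \<notin> Y \<or> a \<notin> stayed (Suc n)"
      by (auto simp: Y'_def stayed_def intro: le_SucI)
    with False show ?thesis
      by (auto simp: f_def Y'_def W_def)
  qed
  then have "(\<integral>a. indicator Y a * W (Suc n) a \<partial>M) \<le> integral\<^sup>L M f"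
    by (intro integral_mono integrable_indicator_W[OF Y_M] int_f)
  also have "\<dots> = (1 - 2 * \<alpha> n * rate) * (\<integral>a. indicator Y a * W n a \<partial>M)
      + (\<alpha> n)\<^sup>2 * (2 * grad_bound\<^sup>2 * M.prob Y' + 2 * (\<integral>a. indicator Y' a * (norm (noise n a))\<^sup>2 \<partial>M))"
    unfolding f_def using cross sq(1) Y'_M integrable_indicator_W[OF Y_M]
    by (simp add: M.emeasure_eq_measure)
  also have "\<dots> \<le> (1 - 2 * \<alpha> n * rate) * (\<integral>a. indicator Y a * W n a \<partial>M) + (\<alpha> n)\<^sup>2 * K * M.prob Y"
  proof -
    have "M.prob Y' \<le> M.prob Y"
      unfolding Y'_def using Y_M by (intro M.finite_measure_mono) auto
    then have "grad_bound\<^sup>2 * M.prob Y' \<le> grad_bound\<^sup>2 * M.prob Y" "\<sigma>\<^sup>2 * M.prob Y' \<le> \<sigma>\<^sup>2 * M.prob Y"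
      by (simp_all add: mult_left_mono)
    then have "2 * grad_bound\<^sup>2 * M.prob Y' + 2 * (\<integral>a. indicator Y' a * (norm (noise n a))\<^sup>2 \<partial>M)
        \<le> K * M.prob Y"
      using sq(2) by (simp add: K_def algebra_simps)
    then show ?thesis
      by (simp add: mult_left_mono mult.assoc)
  qed
  finally show ?thesis .
qed

definition sq_tail where "sq_tail n = (\<Sum>j. (\<alpha> j)\<^sup>2) - (\<Sum>j<n. (\<alpha> j)\<^sup>2)"

lemma sq_tail_nonneg: "0 \<le> sq_tail n"
  unfolding sq_tail_def using sum_le_suminf[OF \<alpha>_sq, of "{..<n}"] by simp

lemma sq_tail_Suc: "sq_tail n = (\<alpha> n)\<^sup>2 + sq_tail (Suc n)"
  by (simp add: sq_tail_def)

lemma sq_tail_tendsto_0: "sq_tail \<longlonglongrightarrow> 0"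
  unfolding sq_tail_def[abs_def]
  using tendsto_diff[OF tendsto_const[of "\<Sum>j. (\<alpha> j)\<^sup>2"] summable_LIMSEQ[OF \<alpha>_sq]] by simp

text \<open>The second-order terms of all later steps are prepaid, which makes the weighted distance a
  supermartingale.\<close>
definition Lyap where "Lyap n a = W n a + K * sq_tail n"

lemma integral_indicator_Lyap:
  assumes "Y \<in> sets M"
  shows "(\<integral>a. indicator Y a * Lyap n a \<partial>M) = (\<integral>a. indicator Y a * W n a \<partial>M) + K * sq_tail n * M.prob Y"
proof -
  have "(\<integral>a. indicator Y a * Lyap n a \<partial>M) = (\<integral>a. indicator Y a * W n a + K * sq_tail n * indicator Y a \<partial>M)"
    by (simp add: Lyap_def algebra_simps)
  then show ?thesis
    using assms integrable_indicator_W[OF assms] by (simp add: M.emeasure_eq_measure)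
qed

lemma Lyap_descent:
  assumes Y: "Y \<in> sets (F n)"
  shows "(\<integral>a. indicator Y a * Lyap (Suc n) a \<partial>M) + 2 * \<alpha> n * rate * (\<integral>a. indicator Y a * W n a \<partial>M)
    \<le> (\<integral>a. indicator Y a * Lyap n a \<partial>M)"
proof -
  have "Y \<in> sets M"
    using Y sets_F_subset by blast
  then show ?thesis
    using integral_W_Suc_le[OF Y] by (simp add: integral_indicator_Lyap sq_tail_Suc[of n] algebra_simps)
qed

sublocale Lyap: nonneg_supermartingale M F Lyap
proof
  show "sets (F n) \<subseteq> sets M" for n
    by (rule sets_F_subset)
  show "Lyap n \<in> borel_measurable (F n)" for n
    unfolding Lyap_def using measurable_W_F by measurable
  show "integrable M (Lyap n)" for n
    using integrable_W[of n] by (simp add: Lyap_def[abs_def])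
  show "0 \<le> Lyap n a" for n a
    using W_nonneg sq_tail_nonneg K_def by (simp add: Lyap_def)
  show "(\<integral>a. indicator Y a * Lyap (Suc n) a \<partial>M) \<le> (\<integral>a. indicator Y a * Lyap n a \<partial>M)"
    if "Y \<in> sets (F n)" for n Y
  proof -
    have "0 \<le> (\<integral>a. indicator Y a * W n a \<partial>M)"
      by (intro integral_nonneg_AE) (simp add: W_nonneg)
    then show ?thesis
      using Lyap_descent[OF that] \<alpha>_pos[of n] rate_pos by (smt (verit) mult_nonneg_nonneg)
  qed
qed

lemma expectation_Lyap_descent:
  "M.expectation (Lyap (Suc n)) + 2 * rate * (\<alpha> n * M.expectation (W n)) \<le> M.expectation (Lyap n)"
proof -
  have eq: "(\<integral>a. indicator (space M) a * f a \<partial>M) = M.expectation f" for f :: "'a \<Rightarrow> real"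
    by (intro Bochner_Integration.integral_cong) auto
  have "space M \<in> sets (F n)"
    using sets.top[of "F n"] by simp
  then show ?thesis
    using Lyap_descent[of "space M" n] unfolding eq by (simp add: algebra_simps)
qed

lemma expectation_Lyap_nonneg: "0 \<le> M.expectation (Lyap n)"
  by (intro integral_nonneg_AE) (simp add: Lyap.nonneg)

lemma expectation_W: "M.expectation (W n) = M.expectation (Lyap n) - K * sq_tail n"
  using integrable_W[of n] by (simp add: Lyap_def[abs_def] M.prob_space)

lemma summable_weighted_expectation_W: "summable (\<lambda>n. \<alpha> n * M.expectation (W n))"
proof (rule summableI_nonneg_bounded)
  show "0 \<le> \<alpha> n * M.expectation (W n)" for n
    using \<alpha>_pos[of n] by (simp add: W_nonneg)
  have bound: "M.expectation (Lyap N) + 2 * rate * (\<Sum>n<N. \<alpha> n * M.expectation (W n))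
      \<le> M.expectation (Lyap 0)" for N
  proof (induction N)
    case (Suc N)
    then show ?case
      using expectation_Lyap_descent[of N] by (simp add: algebra_simps)
  qed simp
  then show "(\<Sum>n<N. \<alpha> n * M.expectation (W n)) \<le> M.expectation (Lyap 0) / (2 * rate)" for N
  proof -
    have "2 * rate * (\<Sum>n<N. \<alpha> n * M.expectation (W n)) \<le> M.expectation (Lyap 0)"
      using bound[of N] expectation_Lyap_nonneg[of N] by linarith
    then show ?thesis
      using rate_pos by (simp add: field_simps)
  qed
qed

lemma expectation_Lyap_tendsto_0: "(\<lambda>n. M.expectation (Lyap n)) \<longlonglongrightarrow> 0"
proof -
  have "decseq (\<lambda>n. M.expectation (Lyap n))"
  proof (rule decseq_SucI)
    show "M.expectation (Lyap (Suc n)) \<le> M.expectation (Lyap n)" for n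
      using expectation_Lyap_descent[of n] \<alpha>_pos[of n] rate_pos integral_nonneg_AE[of "W n" M]
      by (smt (verit) W_nonneg AE_I2 mult_nonneg_nonneg)
  qed
  then obtain l where l: "(\<lambda>n. M.expectation (Lyap n)) \<longlonglongrightarrow> l"
    using expectation_Lyap_nonneg by (metis decseq_convergent)
  then have "0 \<le> l"
    using expectation_Lyap_nonneg by (intro LIMSEQ_le_const) auto
  moreover have "\<not> 0 < l"
  proof
    assume "0 < l"
    have "(\<lambda>n. M.expectation (W n)) \<longlonglongrightarrow> l - K * 0"
      unfolding expectation_W by (intro tendsto_intros l sq_tail_tendsto_0)
    then have "\<forall>\<^sub>F n in sequentially. l / 2 < M.expectation (W n)"
      using \<open>0 < l\<close> by (intro order_tendstoD) auto
    then have "\<forall>\<^sub>F n in sequentially. norm (\<alpha> n) \<le> 2 / l * (\<alpha> n * M.expectation (W n))"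
    proof (rule eventually_mono)
      fix n assume "l / 2 < M.expectation (W n)"
      then have "\<alpha> n * (l / 2) \<le> \<alpha> n * M.expectation (W n)"
        using \<alpha>_pos[of n] by simp
      then show "norm (\<alpha> n) \<le> 2 / l * (\<alpha> n * M.expectation (W n))"
        using \<alpha>_pos[of n] \<open>0 < l\<close> by (simp add: field_simps)
    qed
    then have "summable \<alpha>"
      by (rule summable_comparison_test_ev[OF _ summable_mult[OF summable_weighted_expectation_W]])
    with \<alpha>_nsum show False ..
  qed
  ultimately show ?thesis
    using l by simp
qed

theorem AE_tendsto_saddle: "AE a in M. (\<forall>n. x n a \<in> cball xs r) \<longrightarrow> (\<lambda>n. x n a) \<longlonglongrightarrow> xs"
  using Lyap.AE_tendsto_zero[OF expectation_Lyap_tendsto_0]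
proof (rule AE_mp, intro AE_I2 impI)
  fix a assume a: "a \<in> space M" and stay: "\<forall>n. x n a \<in> cball xs r"
    and Lyap: "(\<lambda>n. Lyap n a) \<longlonglongrightarrow> 0"
  have "(norm (x n a - xs))\<^sup>2 \<le> Lyap n a" for n
    using a stay sq_tail_nonneg[of n] K_def by (simp add: Lyap_def W_def dist2_def stayed_def)
  then have "(\<lambda>n. (norm (x n a - xs))\<^sup>2) \<longlonglongrightarrow> 0"
    by (intro tendsto_sandwich[OF _ _ tendsto_const Lyap] always_eventually) simp_all
  then have "(\<lambda>n. sqrt ((norm (x n a - xs))\<^sup>2)) \<longlonglongrightarrow> sqrt 0"
    by (rule tendsto_real_sqrt)
  then have "(\<lambda>n. norm (x n a - xs)) \<longlonglongrightarrow> 0"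
    by simp
  then show "(\<lambda>n. x n a) \<longlonglongrightarrow> xs"
    by (rule LIM_zero_cancel[OF tendsto_norm_zero_cancel])
qed

end

theorem corollary4p18:
  fixes f :: "real^'n \<Rightarrow> real"
    and g :: "real^'n \<Rightarrow> real^'n"
    and H :: "real^'n \<Rightarrow> real^'n^'n"
    and H3 :: "real^'n \<Rightarrow> ((real^'n) \<Rightarrow>\<^sub>L (real^'n^'n))"
    and k :: nat
    and xs :: "real^'n"
    and \<delta> L \<mu> Mlip \<theta> \<sigma> :: real
    and \<alpha> :: "nat \<Rightarrow> real"
    and M :: "'a measure"
    and P :: "'b measure"
    and G :: "real^'n \<Rightarrow> 'b \<Rightarrow> real^'n"
    and \<omega> :: "nat \<Rightarrow> 'a \<Rightarrow> 'b"
    and x :: "nat \<Rightarrow> 'a \<Rightarrow> real^'n"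
    and V :: "nat \<Rightarrow> nat \<Rightarrow> 'a \<Rightarrow> real^'n"
  assumes grad: "\<And>y. (f has_derivative (\<lambda>h. g y \<bullet> h)) (at y)"
    and hess: "\<And>y. (g has_derivative (\<lambda>h. H y *v h)) (at y)"
    and third: "\<And>y. (H has_derivative blinfun_apply (H3 y)) (at y)"
    and third_cont: "continuous_on UNIV H3"
    and k_ge: "1 \<le> k" and k_le: "k + 1 \<le> CARD('n)"
    and crit: "g xs = 0"
    and \<delta>_pos: "\<delta> > 0" and \<mu>_pos: "\<mu> > 0" and L_gt: "L > \<mu>" and M_pos: "Mlip > 0"
    and eig: "\<And>y. norm (y - xs) \<le> \<delta> \<Longrightarrow>
               \<exists>lam. sym_eigenvalues (H y) lam \<and>
                 (\<forall>i<k. - L < lam i \<and> lam i < - \<mu>) \<and>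
                 (\<forall>i. k \<le> i \<longrightarrow> i < CARD('n) \<longrightarrow> \<mu> < lam i \<and> lam i < L)"
    and lip: "\<And>y z. norm (y - xs) \<le> \<delta> \<Longrightarrow> norm (z - xs) \<le> \<delta> \<Longrightarrow>
               mat_opnorm (H y - H z) \<le> Mlip * norm (y - z)"
    and \<theta>_pos: "\<theta> > 0"
    and C_pos: "(1 - sqrt \<theta>) * \<mu> - L * \<theta> - 5 * L * sqrt \<theta> > 0"
    and \<alpha>_pos: "\<And>n. 0 < \<alpha> n" and \<alpha>_le: "\<And>n. \<alpha> n < 1 / (2 * \<mu>)"
    and \<alpha>_nsum: "\<not> summable \<alpha>"
    and \<alpha>_sq: "summable (\<lambda>n. (\<alpha> n)\<^sup>2)"
    and M_prob: "prob_space M"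
    and P_prob: "prob_space P"
    and G_meas: "(\<lambda>(y, s). G y s) \<in> borel_measurable (borel \<Otimes>\<^sub>M P)"
    and G_int: "\<And>y. integrable P (G y)"
    and G_unbiased: "\<And>y. (\<integral>s. G y s \<partial>P) = g y"
    and G_var: "\<And>y. (\<integral>\<^sup>+ s. ennreal ((norm (G y s - g y))\<^sup>2) \<partial>P) \<le> ennreal (\<sigma>\<^sup>2)"
    and \<omega>_meas: "\<And>n. \<omega> n \<in> measurable M P"
    and \<omega>_distr: "\<And>n. distr M P (\<omega> n) = P"
    and x_meas: "\<And>n. x n \<in> borel_measurable M"
    and V_meas: "\<And>n i. V n i \<in> borel_measurable M"
    and \<omega>_indep: "\<And>n. prob_space.indep_set M
                    (sets (vimage_algebra (space M) (\<omega> n) P))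
                    (sets (vimage_algebra (space M)
                      (\<lambda>a. (restrict (\<lambda>j. x j a) {..n}, restrict (\<lambda>i. V n i a) {..<k}))
                      (Pi\<^sub>M {..n} (\<lambda>_. borel) \<Otimes>\<^sub>M Pi\<^sub>M {..<k} (\<lambda>_. borel))))"
    and V_orth: "\<And>n a. a \<in> space M \<Longrightarrow> orthonormal_fam k (\<lambda>i. V n i a)"
    and V_approx: "\<And>n a. a \<in> space M \<Longrightarrow>
                    x n a \<in> cball xs (min (((1 - sqrt \<theta>) * \<mu> - L * \<theta> - 5 * L * sqrt \<theta>) / Mlip) \<delta>) \<Longrightarrow>
                    \<exists>v. bottom_eigvecs (H (x n a)) k v \<and>
                      (mat_opnorm ((\<Sum>i<k. outer (V n i a)) - (\<Sum>i<k. outer (v i))))\<^sup>2 \<le> \<theta>"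
    and iter: "\<And>n a. a \<in> space M \<Longrightarrow>
                x (Suc n) a = x n a - \<alpha> n *\<^sub>R
                  ((mat 1 - 2 *\<^sub>R (\<Sum>i<k. outer (V n i a))) *v G (x n a) (\<omega> n a))"
    and E_pos: "measure M {a \<in> space M. \<forall>n. x n a \<in>
                  cball xs (min (((1 - sqrt \<theta>) * \<mu> - L * \<theta> - 5 * L * sqrt \<theta>) / Mlip) \<delta>)} > 0"
  shows "AE a in M. (\<forall>n. x n a \<in>
                  cball xs (min (((1 - sqrt \<theta>) * \<mu> - L * \<theta> - 5 * L * sqrt \<theta>) / Mlip) \<delta>))
           \<longrightarrow> (\<lambda>n. x n a) \<longlonglongrightarrow> xs"
proof -
  \<comment> \<open>Only the gradient g of f enters the argument.\<close>
  define C where "C = (1 - sqrt \<theta>) * \<mu> - L * \<theta> - 5 * L * sqrt \<theta>"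
  have radius_small: "Mlip * min (C / Mlip) \<delta> < \<mu> - 2 * sqrt \<theta> * L"
  proof -
    have "Mlip * min (C / Mlip) \<delta> \<le> C"
      using M_pos by (simp add: min_def field_simps)
    also have "C < \<mu> - 2 * sqrt \<theta> * L"
      using \<theta>_pos \<mu>_pos L_gt by (simp add: C_def algebra_simps add_pos_pos)
    finally show ?thesis .
  qed
  interpret saddle_sgd g H k xs \<delta> L \<mu> Mlip \<theta> \<sigma> "min (C / Mlip) \<delta>" \<alpha> M P G \<omega> x V
  proof (rule saddle_sgd.intro)
    show "saddle_spectrum (H y) k \<mu> L" if "norm (y - xs) \<le> \<delta>" for y
      using eig[OF that] by (simp add: saddle_spectrum_def)
    show "0 \<le> min (C / Mlip) \<delta>"
      using C_pos M_pos \<delta>_pos by (simp add: C_def)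
    show "k \<le> CARD('n)" "0 \<le> \<mu>" "0 \<le> L" "0 \<le> Mlip" "min (C / Mlip) \<delta> \<le> \<delta>"
      using k_le \<mu>_pos L_gt M_pos by simp_all
  qed (fact hess crit lip radius_small \<alpha>_pos \<alpha>_nsum \<alpha>_sq M_prob P_prob G_meas G_int G_unbiased G_var
      \<omega>_meas \<omega>_distr x_meas V_meas \<omega>_indep V_orth V_approx[folded C_def] iter)+
  show ?thesis
    using AE_tendsto_saddle by (simp add: C_def)
qed

end
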